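(* Let $\{a_k\}_{k\in\mathbb{Z}}$, $\{b_k\}_{k\in\mathbb{Z}}$ be real sequences with $a_k>0$, and let $L$, $L^\ast$, $\mathcal{D}^\ast$ be as described in the context. Let $J^+$ and $J^-$ be the Jacobi operators on $\ell^2(\mathbb{Z}_{\geq 0})$ described in the context, and assume that $J^-$ has deficiency indices $(0,0)$ and $J^+$ has deficiency indices $(1,1)$ (so that $L$ has deficiency indices $(1,1)$). Let $\Phi_{i},\Phi_{-i}\in\ell^2(\mathbb{Z})$ satisfy $L^\ast\Phi_{\pm i}=\pm i\,\Phi_{\pm i}$, $\overline{(\Phi_i)_k}=(\Phi_{-i})_k$ for all $k\in\mathbb{Z}$, and $\|\Phi_{\pm i}\|=1$. For $\theta\in[0,2\pi)$ put $$\mathcal D_\theta=\{v\in\mathcal{D}^\ast\mid \lim_{N\to\infty}[v,e^{i\theta}\Phi_i+e^{-i\theta}\Phi_{-i}]_N=0\}.$$ Then the self-adjoint extensions of $(L,\mathcal{D}(\mathbb{Z}))$ are precisely the operators $(L^\ast,\mathcal D_\theta)$ (i.e. $L^\ast$ restricted to $\mathcal D_\theta$), $\theta\in[0,2\pi)$.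
   Context: $\{e_k\}_{k\in\mathbb{Z}}$ is the standard orthonormal basis of $\ell^2(\mathbb{Z})$, $\mathcal{D}(\mathbb{Z})$ the space of finite linear combinations of the $e_k$, and $L e_k=a_ke_{k+1}+b_ke_k+a_{k-1}e_{k-1}$ on $\mathcal{D}(\mathbb{Z})$. For $v\in\ell^2(\mathbb{Z})$, $L^\ast v=\sum_k(a_kv_{k+1}+b_kv_k+a_{k-1}v_{k-1})e_k$ (formally) and $\mathcal{D}^\ast=\{v\in\ell^2(\mathbb{Z})\mid L^\ast v\in\ell^2(\mathbb{Z})\}$; $(L^\ast,\mathcal D^\ast)$ is the adjoint of $L$. The Wronskian of two sequences $u,v$ is $[u,v]_k=a_k(u_{k+1}v_k-u_kv_{k+1})$. With $\{f_k\}_{k\geq0}$ the standard basis of $\ell^2(\mathbb{Z}_{\geq0})$, $J^+$ and $J^-$ are defined on finite linear combinations of the $f_k$ by $J^+f_k=a_kf_{k+1}+b_kf_k+a_{k-1}f_{k-1}$ ($k\geq1$), $J^+f_0=a_0f_1+b_0f_0$, and $J^-f_k=a_{-k-2}f_{k+1}+b_{-k-1}f_k+a_{-k-1}f_{k-1}$ ($k\geq1$), $J^-f_0=a_{-2}f_1+b_{-1}f_0$; these are densely defined symmetric operators. For a densely defined symmetric operator $T$, the deficiency indices are $(\dim\ker(T^\ast-i),\dim\ker(T^\ast+i))$. *)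

theory Defs
  imports "HOL-Analysis.Analysis"
begin

definition l2 :: "('i \<Rightarrow> complex) set" where
  "l2 = {v. (\<lambda>k. (cmod (v k))\<^sup>2) summable_on UNIV}"

definition l2_inner :: "('i \<Rightarrow> complex) \<Rightarrow> ('i \<Rightarrow> complex) \<Rightarrow> complex" where
  "l2_inner u v = (\<Sum>\<^sub>\<infinity>k. cnj (u k) * v k)"

definition l2_norm :: "('i \<Rightarrow> complex) \<Rightarrow> real" where
  "l2_norm v = sqrt (\<Sum>\<^sub>\<infinity>k. (cmod (v k))\<^sup>2)"

definition fin_seq :: "('i \<Rightarrow> complex) set" where
  "fin_seq = {v. finite {k. v k \<noteq> 0}}"

definition adj_dom :: "(('i \<Rightarrow> complex) \<Rightarrow> ('i \<Rightarrow> complex)) \<Rightarrow> ('i \<Rightarrow> complex) set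
    \<Rightarrow> ('i \<Rightarrow> complex) set" where
  "adj_dom T D = {w \<in> l2. \<exists>z \<in> l2. \<forall>u \<in> D. l2_inner (T u) w = l2_inner u z}"

definition adj :: "(('i \<Rightarrow> complex) \<Rightarrow> ('i \<Rightarrow> complex)) \<Rightarrow> ('i \<Rightarrow> complex) set
    \<Rightarrow> ('i \<Rightarrow> complex) \<Rightarrow> ('i \<Rightarrow> complex)" where
  "adj T D w = (SOME z. z \<in> l2 \<and> (\<forall>u \<in> D. l2_inner (T u) w = l2_inner u z))"

definition adj_eigspace :: "(('i \<Rightarrow> complex) \<Rightarrow> ('i \<Rightarrow> complex)) \<Rightarrow> ('i \<Rightarrow> complex) set
    \<Rightarrow> complex \<Rightarrow> ('i \<Rightarrow> complex) set" where
  "adj_eigspace T D c = {w \<in> adj_dom T D. adj T D w = (\<lambda>k. c * w k)}"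

definition dim0 :: "('i \<Rightarrow> complex) set \<Rightarrow> bool" where
  "dim0 S \<longleftrightarrow> S = {\<lambda>k. 0}"

definition dim1 :: "('i \<Rightarrow> complex) set \<Rightarrow> bool" where
  "dim1 S \<longleftrightarrow> (\<exists>w \<in> S. w \<noteq> (\<lambda>k. 0) \<and> S = {(\<lambda>k. c * w k) | c. True})"

definition def_indices_00 :: "(('i \<Rightarrow> complex) \<Rightarrow> ('i \<Rightarrow> complex)) \<Rightarrow> ('i \<Rightarrow> complex) set \<Rightarrow> bool" where
  "def_indices_00 T D \<longleftrightarrow> dim0 (adj_eigspace T D \<i>) \<and> dim0 (adj_eigspace T D (- \<i>))"

definition def_indices_11 :: "(('i \<Rightarrow> complex) \<Rightarrow> ('i \<Rightarrow> complex)) \<Rightarrow> ('i \<Rightarrow> complex) set \<Rightarrow> bool" where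
  "def_indices_11 T D \<longleftrightarrow> dim1 (adj_eigspace T D \<i>) \<and> dim1 (adj_eigspace T D (- \<i>))"

definition self_adjoint_ext :: "(('i \<Rightarrow> complex) \<Rightarrow> ('i \<Rightarrow> complex)) \<Rightarrow> ('i \<Rightarrow> complex) set
    \<Rightarrow> (('i \<Rightarrow> complex) \<Rightarrow> ('i \<Rightarrow> complex)) \<Rightarrow> ('i \<Rightarrow> complex) set \<Rightarrow> bool" where
  "self_adjoint_ext T D A DA \<longleftrightarrow>
     D \<subseteq> DA \<and> DA \<subseteq> l2 \<and> (\<forall>v \<in> DA. A v \<in> l2) \<and> (\<forall>v \<in> D. A v = T v) \<and>
     adj_dom A DA = DA \<and> (\<forall>w \<in> DA. adj A DA w = A w)"

text \<open>The formal action of L (equals L on fin_seq and L* on all sequences).\<close>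
definition Lact :: "(int \<Rightarrow> real) \<Rightarrow> (int \<Rightarrow> real) \<Rightarrow> (int \<Rightarrow> complex) \<Rightarrow> (int \<Rightarrow> complex)" where
  "Lact a b v = (\<lambda>k. of_real (a k) * v (k + 1) + of_real (b k) * v k + of_real (a (k - 1)) * v (k - 1))"

definition Dstar :: "(int \<Rightarrow> real) \<Rightarrow> (int \<Rightarrow> real) \<Rightarrow> (int \<Rightarrow> complex) set" where
  "Dstar a b = {v \<in> l2. Lact a b v \<in> l2}"

definition wronskian :: "(int \<Rightarrow> real) \<Rightarrow> (int \<Rightarrow> complex) \<Rightarrow> (int \<Rightarrow> complex) \<Rightarrow> int \<Rightarrow> complex" where
  "wronskian a u v k = of_real (a k) * (u (k + 1) * v k - u k * v (k + 1))"

definition Jplus :: "(int \<Rightarrow> real) \<Rightarrow> (int \<Rightarrow> real) \<Rightarrow> (nat \<Rightarrow> complex) \<Rightarrow> (nat \<Rightarrow> complex)" where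
  "Jplus a b v = (\<lambda>j. of_real (a (int j)) * v (j + 1) + of_real (b (int j)) * v j
      + (if j = 0 then 0 else of_real (a (int j - 1)) * v (j - 1)))"

definition Jminus :: "(int \<Rightarrow> real) \<Rightarrow> (int \<Rightarrow> real) \<Rightarrow> (nat \<Rightarrow> complex) \<Rightarrow> (nat \<Rightarrow> complex)" where
  "Jminus a b v = (\<lambda>j. of_real (a (- int j - 2)) * v (j + 1) + of_real (b (- int j - 1)) * v j
      + (if j = 0 then 0 else of_real (a (- int j - 1)) * v (j - 1)))"

definition Dtheta :: "(int \<Rightarrow> real) \<Rightarrow> (int \<Rightarrow> real) \<Rightarrow> (int \<Rightarrow> complex) \<Rightarrow> (int \<Rightarrow> complex)
    \<Rightarrow> real \<Rightarrow> (int \<Rightarrow> complex) set" where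
  "Dtheta a b Pp Pm \<theta> = {v \<in> Dstar a b.
     (\<lambda>N::nat. wronskian a v (\<lambda>k. exp (\<i> * of_real \<theta>) * Pp k + exp (- \<i> * of_real \<theta>) * Pm k) (int N))
       \<longlonglongrightarrow> 0}"

end

theory Submission
  imports Defs
begin

text \<open>
  For \<open>u, w \<in> D\<^sup>*\<close> Green's formula reads \<open>\<langle>L u, w\<rangle> - \<langle>u, L w\<rangle> = \<omega>(cnj u, w)\<close>, where the boundary form
  \<open>\<omega>(u, w) = \<Sum>\<^sub>k ((L u)\<^sub>k w\<^sub>k - u\<^sub>k (L w)\<^sub>k)\<close> telescopes into the difference of the limits of the
  Wronskian \<open>[u, w]\<^sub>N\<close> at \<open>+\<infinity>\<close> and at \<open>-\<infinity>\<close>.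

  The limit at \<open>-\<infinity>\<close> vanishes. As \<open>J\<^sup>-\<close> has no deficiency, the solution \<open>\<epsilon>\<close> of \<open>L \<epsilon> = \<i> \<epsilon>\<close> on the
  negative half-line with \<open>\<epsilon>\<^sub>0 = 0\<close> is not square summable. For \<open>u \<in> D\<^sup>*\<close> the Wronskian
  \<open>[u, \<Phi>\<^sub>i]\<^sub>N\<close> converges as \<open>N \<rightarrow> -\<infinity>\<close>; were the limit nonzero, the identity
  \<open>u [\<Phi>\<^sub>i, \<epsilon>] = \<Phi>\<^sub>i [u, \<epsilon>] - \<epsilon> [u, \<Phi>\<^sub>i]\<close> and a Gronwall-type estimate would make \<open>\<epsilon>\<close> square
  summable. The Pluecker identity \<open>[u, v] [\<Phi>\<^sub>i, \<Phi>\<^sub>-\<^sub>i] = [u, \<Phi>\<^sub>i] [v, \<Phi>\<^sub>-\<^sub>i] - [u, \<Phi>\<^sub>-\<^sub>i] [v, \<Phi>\<^sub>i]\<close>, in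
  which \<open>[\<Phi>\<^sub>i, \<Phi>\<^sub>-\<^sub>i]\<^sub>N\<close> is \<open>2\<i>\<close> times the squared norm of \<open>\<Phi>\<^sub>i\<close> on \<open>{..N}\<close>, then bounds
  \<open>[u, v]\<^sub>N\<close> by products of tails of square-summable sequences.

  At \<open>+\<infinity>\<close> the same identity and \<open>\<parallel>\<Phi>\<^sub>i\<parallel> = 1\<close> give \<open>2\<i> \<omega>(cnj u, w) = cnj (\<beta> u) \<beta> w - cnj (\<alpha> u) \<alpha> w\<close>
  with \<open>\<alpha> = \<omega>(\<cdot>, \<Phi>\<^sub>i)\<close> and \<open>\<beta> = \<omega>(\<cdot>, \<Phi>\<^sub>-\<^sub>i)\<close>. The self-adjoint extensions of \<open>L\<close> are the
  restrictions of \<open>L\<^sup>*\<close> to the domains \<open>D \<supseteq> \<D>(\<int>)\<close> that coincide with their \<open>\<omega>\<close>-orthogonal complement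
  in \<open>D\<^sup>*\<close>. On such a \<open>D\<close> we have \<open>|\<alpha>| = |\<beta>|\<close>, and any \<open>u\<^sub>0 \<in> D\<close> with \<open>\<beta> u\<^sub>0 \<noteq> 0\<close> pins \<open>D\<close> down
  to the solutions of \<open>e\<^sup>i\<^sup>\<theta> \<alpha> + e\<^sup>-\<^sup>i\<^sup>\<theta> \<beta> = 0\<close>, which form \<open>\<D>\<^sub>\<theta>\<close>.
\<close>

lemma mem_l2_iff: "v \<in> l2 \<longleftrightarrow> (\<lambda>k. (cmod (v k))\<^sup>2) summable_on UNIV"
  by (simp add: l2_def)

lemma summable_on_diff:
  fixes f g :: "'a \<Rightarrow> 'b :: topological_ab_group_add"
  assumes "f summable_on A" "g summable_on A"
  shows "(\<lambda>x. f x - g x) summable_on A"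
  using summable_on_add[OF assms(1) summable_on_uminus[THEN iffD2, OF assms(2)]] by simp

lemma infsum_diff:
  fixes f g :: "'a \<Rightarrow> 'b :: {topological_ab_group_add, t2_space}"
  assumes "f summable_on A" "g summable_on A"
  shows "infsum (\<lambda>x. f x - g x) A = infsum f A - infsum g A"
  using infsum_add[OF assms(1) summable_on_uminus[THEN iffD2, OF assms(2)]] by (simp add: infsum_uminus)

lemma l2_cnj: "u \<in> l2 \<Longrightarrow> (\<lambda>k. cnj (u k)) \<in> l2"
  by (simp add: mem_l2_iff)

lemma l2_scale: "u \<in> l2 \<Longrightarrow> (\<lambda>k. c * u k) \<in> l2"
  unfolding mem_l2_iff by (simp add: norm_mult power_mult_distrib summable_on_cmult_right)

lemma l2_add:
  assumes "u \<in> l2" "v \<in> l2"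
  shows "(\<lambda>k. u k + v k) \<in> l2"
  unfolding mem_l2_iff
proof (rule summable_on_comparison_test)
  show "(\<lambda>k. 2 * (cmod (u k))\<^sup>2 + 2 * (cmod (v k))\<^sup>2) summable_on UNIV"
    using assms unfolding mem_l2_iff by (intro summable_on_add summable_on_cmult_right)
  fix k
  have "(cmod (u k + v k))\<^sup>2 \<le> (cmod (u k) + cmod (v k))\<^sup>2"
    by (simp add: norm_triangle_ineq power_mono)
  also have "\<dots> \<le> 2 * (cmod (u k))\<^sup>2 + 2 * (cmod (v k))\<^sup>2"
    using sum_squares_bound[of "cmod (u k)" "cmod (v k)"] by (simp add: power2_sum)
  finally show "(cmod (u k + v k))\<^sup>2 \<le> 2 * (cmod (u k))\<^sup>2 + 2 * (cmod (v k))\<^sup>2" .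
qed simp

lemma l2_diff: "u \<in> l2 \<Longrightarrow> v \<in> l2 \<Longrightarrow> (\<lambda>k. u k - v k) \<in> l2"
  using l2_add[of u "\<lambda>k. - 1 * v k"] l2_scale[of v "- 1"] by simp

lemma l2_mult_summable:
  assumes "u \<in> l2" "v \<in> l2"
  shows "(\<lambda>k. u k * v k) summable_on UNIV"
proof (rule abs_summable_summable)
  have bound: "(\<lambda>k. ((cmod (u k))\<^sup>2 + (cmod (v k))\<^sup>2) * (1 / 2)) summable_on UNIV"
    using assms unfolding mem_l2_iff by (intro summable_on_add summable_on_cmult_left)
  have "norm (u k * v k) \<le> ((cmod (u k))\<^sup>2 + (cmod (v k))\<^sup>2) * (1 / 2)" for k
    using sum_squares_bound[of "cmod (u k)" "cmod (v k)"] by (simp add: norm_mult)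
  then show "(\<lambda>k. norm (u k * v k)) summable_on UNIV"
    by (intro Infinite_Sum.abs_summable_on_comparison_test'[OF bound])
qed

lemma l2_reindex:
  assumes "v \<in> l2" "inj h"
  shows "(\<lambda>j. v (h j)) \<in> l2"
proof -
  have "(\<lambda>k. (cmod (v k))\<^sup>2) summable_on range h"
    using assms(1) unfolding mem_l2_iff by (rule summable_on_subset) auto
  then have "((\<lambda>k. (cmod (v k))\<^sup>2) \<circ> h) summable_on UNIV"
    by (rule summable_on_reindex[OF assms(2), THEN iffD1])
  then show ?thesis
    unfolding mem_l2_iff comp_def .
qed

lemma l2_nat_iff: "(x :: nat \<Rightarrow> complex) \<in> l2 \<longleftrightarrow> summable (\<lambda>n. (cmod (x n))\<^sup>2)"
  unfolding mem_l2_iff by (subst summable_on_UNIV_nonneg_real_iff) auto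

lemma fin_seq_subset_l2: "fin_seq \<subseteq> l2"
proof
  fix u :: "'i \<Rightarrow> complex"
  assume "u \<in> fin_seq"
  then have "(\<lambda>k. (cmod (u k))\<^sup>2) summable_on {k. u k \<noteq> 0}"
    unfolding fin_seq_def by simp
  then show "u \<in> l2"
    unfolding mem_l2_iff by (rule summable_on_cong_neutral[THEN iffD1, rotated -1]) auto
qed

lemma fin_seq_int_bound:
  assumes "(u :: int \<Rightarrow> complex) \<in> fin_seq"
  obtains M :: nat where "\<And>k. int M < \<bar>k\<bar> \<Longrightarrow> u k = 0"
proof -
  have "finite {k. u k \<noteq> 0}"
    using assms by (simp add: fin_seq_def)
  then obtain M where M: "abs ` {k. u k \<noteq> 0} \<subseteq> {..M}"
    unfolding finite_int_iff_bounded_le by blast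
  have "u k = 0" if "int (nat M) < \<bar>k\<bar>" for k
  proof (rule ccontr)
    assume "u k \<noteq> 0"
    then have "\<bar>k\<bar> \<le> M"
      using M by blast
    then show False
      using that by linarith
  qed
  then show ?thesis
    using that by blast
qed

lemma fin_seq_nat_bound:
  assumes "(u :: nat \<Rightarrow> complex) \<in> fin_seq"
  obtains n :: nat where "\<And>j. n \<le> j \<Longrightarrow> u j = 0"
proof -
  have "finite {k. u k \<noteq> 0}"
    using assms by (simp add: fin_seq_def)
  then obtain n where "\<And>k. u k \<noteq> 0 \<Longrightarrow> k < n"
    unfolding finite_nat_set_iff_bounded by blast
  then show ?thesis
    using that by (meson not_le)
qed

lemma l2_inner_finite_support:
  assumes "finite S" "\<And>k. k \<notin> S \<Longrightarrow> x k = 0"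
  shows "l2_inner x y = (\<Sum>k\<in>S. cnj (x k) * y k)"
proof -
  have "l2_inner x y = infsum (\<lambda>k. cnj (x k) * y k) S"
    unfolding l2_inner_def by (rule infsum_cong_neutral) (auto simp: assms)
  then show ?thesis
    using assms by simp
qed

lemma fin_seq_l2_inner_ext:
  fixes x y :: "'a \<Rightarrow> complex"
  assumes "\<And>u. u \<in> fin_seq \<Longrightarrow> l2_inner u x = l2_inner u y"
  shows "x = y"
proof
  fix k
  define d :: "'a \<Rightarrow> complex" where "d = (\<lambda>j. if j = k then 1 else 0)"
  have "d \<in> fin_seq"
    by (simp add: fin_seq_def d_def)
  have "l2_inner d z = z k" for z
    by (subst l2_inner_finite_support[of "{k}"]) (auto simp: d_def)
  then show "x k = y k"
    using assms[OF \<open>d \<in> fin_seq\<close>] by simp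
qed

lemma adj_spec:
  assumes "w \<in> adj_dom T D"
  shows "adj T D w \<in> l2" "\<And>u. u \<in> D \<Longrightarrow> l2_inner (T u) w = l2_inner u (adj T D w)"
proof -
  obtain z where "z \<in> l2 \<and> (\<forall>u\<in>D. l2_inner (T u) w = l2_inner u z)"
    using assms unfolding adj_dom_def by blast
  then have "adj T D w \<in> l2 \<and> (\<forall>u\<in>D. l2_inner (T u) w = l2_inner u (adj T D w))"
    unfolding adj_def by (rule someI[where x = z])
  then show "adj T D w \<in> l2" "\<And>u. u \<in> D \<Longrightarrow> l2_inner (T u) w = l2_inner u (adj T D w)"
    by auto
qed

lemma adj_eqI:
  assumes "fin_seq \<subseteq> D" "w \<in> l2" "z \<in> l2" "\<And>u. u \<in> D \<Longrightarrow> l2_inner (T u) w = l2_inner u z"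
  shows "w \<in> adj_dom T D" "adj T D w = z"
proof -
  show dom: "w \<in> adj_dom T D"
    using assms unfolding adj_dom_def by blast
  show "adj T D w = z"
    using assms adj_spec[OF dom] by (intro fin_seq_l2_inner_ext) auto
qed

lemma Lact_cnj: "Lact a b (\<lambda>k. cnj (u k)) = (\<lambda>k. cnj (Lact a b u k))"
  by (simp add: Lact_def fun_eq_iff)

lemma Lact_lincomb:
  "Lact a b (\<lambda>k. c * u k + d * v k) = (\<lambda>k. c * Lact a b u k + d * Lact a b v k)"
  by (simp add: Lact_def fun_eq_iff algebra_simps)

lemma wronskian_diff:
  "wronskian a u v k - wronskian a u v (k - 1) = Lact a b u k * v k - u k * Lact a b v k"
  by (simp add: Lact_def wronskian_def algebra_simps)

lemma sum_Lact_wronskian: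
  assumes "m - 1 \<le> n"
  shows "(\<Sum>k\<in>{m..n}. Lact a b u k * v k - u k * Lact a b v k)
           = wronskian a u v n - wronskian a u v (m - 1)"
  using assms
proof (induction n rule: int_ge_induct)
  case base
  then show ?case by simp
next
  case (step n)
  let ?g = "\<lambda>k. Lact a b u k * v k - u k * Lact a b v k"
  have "{m..n + 1} = insert (n + 1) {m..n}"
    using step.hyps by auto
  then have "sum ?g {m..n + 1} = ?g (n + 1) + sum ?g {m..n}"
    by simp
  also have "\<dots> = (wronskian a u v (n + 1) - wronskian a u v n) + (wronskian a u v n - wronskian a u v (m - 1))"
    using step.IH wronskian_diff[of a u v "n + 1" b] by simp
  also have "\<dots> = wronskian a u v (n + 1) - wronskian a u v (m - 1)"
    by simp
  finally show ?case .
qed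

lemma wronskian_cnj: "wronskian a (\<lambda>k. cnj (u k)) (\<lambda>k. cnj (v k)) k = cnj (wronskian a u v k)"
  by (simp add: wronskian_def)

lemma wronskian_plucker:
  "wronskian a u v k * wronskian a x y k =
     wronskian a u x k * wronskian a v y k - wronskian a u y k * wronskian a v x k"
  unfolding wronskian_def by algebra

lemma wronskian_three_term:
  "u k * wronskian a y z k = y k * wronskian a u z k - z k * wronskian a u y k"
  by (simp add: wronskian_def algebra_simps)

lemma Lact_symmetric_fin_seq:
  assumes "u \<in> fin_seq"
  shows "l2_inner (Lact a b u) w = l2_inner u (Lact a b w)"
proof -
  obtain M :: nat where M: "\<And>k. int M < \<bar>k\<bar> \<Longrightarrow> u k = 0"
    using fin_seq_int_bound[OF assms] by blast
  define m where "m = - int M - 1"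
  define n where "n = int M + 1"
  have out: "u k = 0" if "k \<le> m \<or> n \<le> k" for k
    using that M by (auto simp: m_def n_def)
  have "l2_inner (Lact a b u) w = (\<Sum>k\<in>{m..n}. cnj (Lact a b u k) * w k)"
    using out by (intro l2_inner_finite_support) (auto simp: Lact_def)
  moreover have "l2_inner u (Lact a b w) = (\<Sum>k\<in>{m..n}. cnj (u k) * Lact a b w k)"
    using out by (intro l2_inner_finite_support) auto
  moreover have "m - 1 \<le> n"
    by (simp add: m_def n_def)
  then have "(\<Sum>k\<in>{m..n}. Lact a b (\<lambda>k. cnj (u k)) k * w k - cnj (u k) * Lact a b w k) = 0"
    using sum_Lact_wronskian[of m n a b "\<lambda>k. cnj (u k)" w] out[of "n + 1"] out[of n] out[of m] out[of "m - 1"]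
    by (simp add: wronskian_def)
  ultimately show ?thesis
    by (simp add: sum_subtractf Lact_cnj)
qed

lemma sum_Jminus_wronskian:
  "(\<Sum>j\<le>n. Jminus a b u j * v j - u j * Jminus a b v j)
     = of_real (a (- int n - 2)) * (u (n + 1) * v n - u n * v (n + 1))"
proof (induction n)
  case 0
  show ?case
    by (simp add: Jminus_def algebra_simps)
next
  case (Suc n)
  have idx: "- int (Suc n) - 1 = - int n - 2" "- int (Suc n) - 2 = - int n - 3"
    by simp_all
  have "Jminus a b u (Suc n) * v (Suc n) - u (Suc n) * Jminus a b v (Suc n)
      = of_real (a (- int n - 3)) * (u (Suc (Suc n)) * v (Suc n) - u (Suc n) * v (Suc (Suc n)))
        - of_real (a (- int n - 2)) * (u (Suc n) * v n - u n * v (Suc n))"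
    unfolding Jminus_def by (simp add: idx algebra_simps)
  then show ?case
    by (simp only: sum.atMost_Suc Suc.IH idx) simp
qed

lemma Jminus_cnj: "Jminus a b (\<lambda>k. cnj (u k)) = (\<lambda>k. cnj (Jminus a b u k))"
  by (simp add: Jminus_def fun_eq_iff)

lemma Jminus_symmetric_fin_seq:
  assumes "u \<in> fin_seq"
  shows "l2_inner (Jminus a b u) w = l2_inner u (Jminus a b w)"
proof -
  obtain n :: nat where n: "\<And>j. n \<le> j \<Longrightarrow> u j = 0"
    using fin_seq_nat_bound[OF assms] by blast
  have "l2_inner (Jminus a b u) w = (\<Sum>j\<le>Suc n. cnj (Jminus a b u j) * w j)"
    using n by (intro l2_inner_finite_support) (auto simp: Jminus_def)
  moreover have "l2_inner u (Jminus a b w) = (\<Sum>j\<le>Suc n. cnj (u j) * Jminus a b w j)"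
    using n by (intro l2_inner_finite_support) auto
  moreover have "(\<Sum>j\<le>Suc n. Jminus a b (\<lambda>k. cnj (u k)) j * w j - cnj (u j) * Jminus a b w j) = 0"
    unfolding sum_Jminus_wronskian using n[of "Suc n"] n[of "Suc n + 1"] by simp
  ultimately show ?thesis
    by (simp add: sum_subtractf Jminus_cnj)
qed

lemma Lact_eigen_eq_zero:
  assumes a_pos: "\<And>k. a k > 0"
    and eigen: "Lact a b y = (\<lambda>k. c * y k)"
    and zero: "y m = 0" "y (m + 1) = 0"
  shows "y = (\<lambda>k. 0)"
proof -
  have a_ne: "complex_of_real (a k) \<noteq> 0" for k
    using a_pos[of k] by simp
  have rec: "of_real (a k) * y (k + 1) + of_real (b k) * y k + of_real (a (k - 1)) * y (k - 1) = c * y k" for k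
    using fun_cong[OF eigen, of k] by (simp add: Lact_def)
  have step_up: "y (k + 1) = 0" if "y k = 0" "y (k - 1) = 0" for k
    using rec[of k] a_ne[of k] that by simp
  have step_down: "y (k - 1) = 0" if "y k = 0" "y (k + 1) = 0" for k
    using rec[of k] a_ne[of "k - 1"] that by simp
  have "y k = 0 \<and> y (k + 1) = 0" if "m \<le> k" for k
    using that
  proof (induction k rule: int_ge_induct)
    case (step k)
    then show ?case
      using step_up[of "k + 1"] by simp
  qed (use zero in simp)
  moreover have "y k = 0 \<and> y (k + 1) = 0" if "k \<le> m" for k
    using that
  proof (induction k rule: int_le_induct)
    case (step k)
    then show ?case
      using step_down[of k] by simp
  qed (use zero in simp)
  ultimately show ?thesis
    by (metis linorder_le_cases)
qed

lemma Dstar_cnj: "u \<in> Dstar a b \<Longrightarrow> (\<lambda>k. cnj (u k)) \<in> Dstar a b"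
  by (simp add: Dstar_def Lact_cnj l2_cnj)

lemma Dstar_lincomb:
  "x \<in> Dstar a b \<Longrightarrow> y \<in> Dstar a b \<Longrightarrow> (\<lambda>k. c * x k + d * y k) \<in> Dstar a b"
  by (simp add: Dstar_def Lact_lincomb l2_add l2_scale)

lemma Dstar_l2: "u \<in> Dstar a b \<Longrightarrow> u \<in> l2"
  by (simp add: Dstar_def)

lemma Dstar_shifted_l2: "u \<in> Dstar a b \<Longrightarrow> (\<lambda>k. Lact a b u k - c * u k) \<in> l2"
  by (simp add: Dstar_def l2_diff l2_scale)

lemma fin_seq_subset_Dstar: "fin_seq \<subseteq> Dstar a b"
proof
  fix u :: "int \<Rightarrow> complex"
  assume u: "u \<in> fin_seq"
  obtain M :: nat where M: "\<And>k. int M < \<bar>k\<bar> \<Longrightarrow> u k = 0"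
    using fin_seq_int_bound[OF u] by blast
  have "Lact a b u k = 0" if "k \<notin> {- int M - 1..int M + 1}" for k
    using that M[of k] M[of "k + 1"] M[of "k - 1"] by (auto simp: Lact_def)
  then have "{k. Lact a b u k \<noteq> 0} \<subseteq> {- int M - 1..int M + 1}"
    by blast
  then have "Lact a b u \<in> fin_seq"
    unfolding fin_seq_def by (auto intro: finite_subset)
  then show "u \<in> Dstar a b"
    using u fin_seq_subset_l2 by (auto simp: Dstar_def)
qed

definition reflect :: "(int \<Rightarrow> 'a) \<Rightarrow> nat \<Rightarrow> 'a" where
  "reflect g n = g (- int n - 1)"

lemma minus_int_Suc: "- int (Suc n) = - int n - 1"
  by simp

lemma reflect_Suc: "reflect g (Suc n) = g (- int n - 1 - 1)"
  by (simp only: reflect_def minus_int_Suc)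

lemma reflect_l2: "g \<in> l2 \<Longrightarrow> summable (\<lambda>n. (cmod (reflect g n))\<^sup>2)"
  unfolding reflect_def l2_nat_iff[symmetric] by (rule l2_reindex) (auto simp: inj_def)

lemma tendsto_reflect_iff: "reflect g \<longlonglongrightarrow> l \<longleftrightarrow> (\<lambda>N. g (- int N)) \<longlonglongrightarrow> l"
proof -
  have "reflect g = (\<lambda>N. g (- int (Suc N)))"
    unfolding fun_eq_iff reflect_def minus_int_Suc by simp
  then show ?thesis
    by (simp only:) (rule filterlim_sequentially_Suc)
qed

lemma Jminus_reflect:
  assumes "y 0 = 0"
  shows "Jminus a b (reflect y) = reflect (Lact a b y)"
proof
  fix j
  define k where "k = - int j - 1"
  have idx: "reflect y j = y k" "reflect y (j + 1) = y (k - 1)" "- int j - 1 = k" "- int j - 2 = k - 1"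
      "reflect (Lact a b y) j = Lact a b y k"
    by (simp_all add: reflect_def k_def)
  show "Jminus a b (reflect y) j = reflect (Lact a b y) j"
  proof (cases j)
    case 0
    then show ?thesis
      using assms by (simp add: Jminus_def Lact_def reflect_def)
  next
    case (Suc i)
    then have "j \<noteq> 0" "int (j - 1) = int j - 1"
      by simp_all
    moreover have "reflect y (j - 1) = y (k + 1)"
      using calculation by (simp add: reflect_def k_def)
    ultimately show ?thesis
      unfolding Jminus_def idx unfolding Lact_def by (simp add: algebra_simps)
  qed
qed

lemma wronskian_diff_reflect:
  "reflect (wronskian a u v) n - reflect (wronskian a u v) (Suc n)
     = reflect (\<lambda>k. Lact a b u k * v k - u k * Lact a b v k) n"
  using wronskian_diff[of a u v "- int n - 1" b] by (simp only: reflect_Suc) (simp add: reflect_def)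

lemma wronskian_diff_reflect_eigen:
  assumes "\<And>k. k \<le> -1 \<Longrightarrow> Lact a b v k = c * v k"
  shows "reflect (wronskian a u v) n - reflect (wronskian a u v) (Suc n)
           = reflect (\<lambda>k. Lact a b u k - c * u k) n * reflect v n"
  using wronskian_diff_reflect[of a u v n b] assms[of "- int n - 1"]
  by (simp add: reflect_def algebra_simps)

text \<open>\<open>left_solution a b c n\<close> is the value at site \<open>-n\<close> of the solution of \<open>L y = c y\<close> on the
  negative half-line with \<open>y 0 = 0\<close> and \<open>y (-1) = 1\<close>.\<close>

fun left_solution :: "(int \<Rightarrow> real) \<Rightarrow> (int \<Rightarrow> real) \<Rightarrow> complex \<Rightarrow> nat \<Rightarrow> complex" where
  "left_solution a b c 0 = 0"
| "left_solution a b c (Suc 0) = 1"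
| "left_solution a b c (Suc (Suc n)) =
     ((c - of_real (b (- int n - 1))) * left_solution a b c (Suc n)
       - of_real (a (- int n - 1)) * left_solution a b c n) / of_real (a (- int n - 2))"

lemma reflect_left_solution: "reflect (\<lambda>k. left_solution a b c (nat (- k))) n = left_solution a b c (Suc n)"
  by (simp add: reflect_def nat_add_distrib)

lemma reflect_wronskian_eigen_const:
  assumes "\<And>k. k \<le> -1 \<Longrightarrow> Lact a b y k = c * y k" "\<And>k. k \<le> -1 \<Longrightarrow> Lact a b e k = c * e k"
  shows "reflect (wronskian a y e) n = wronskian a y e (-1)"
proof (induction n)
  case 0
  show ?case
    by (simp add: reflect_def)
next
  case (Suc n)
  have "reflect (\<lambda>k. Lact a b y k - c * y k) n = 0"
    using assms(1)[of "- int n - 1"] by (simp add: reflect_def)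
  then show ?case
    using Suc wronskian_diff_reflect_eigen[where u = y and n = n, OF assms(2)] by simp
qed

section \<open>The boundary form and self-adjoint extensions\<close>

text \<open>By \<open>sum_Lact_wronskian\<close>, \<open>boundary_form a b u v\<close> is the difference of the
  limits of the Wronskian \<open>[u, v]\<close> at \<open>+\<infinity>\<close> and at \<open>-\<infinity>\<close>.\<close>

definition boundary_form :: "(int \<Rightarrow> real) \<Rightarrow> (int \<Rightarrow> real) \<Rightarrow> (int \<Rightarrow> complex) \<Rightarrow> (int \<Rightarrow> complex) \<Rightarrow> complex" where
  "boundary_form a b u v = (\<Sum>\<^sub>\<infinity>k. Lact a b u k * v k - u k * Lact a b v k)"

lemma boundary_form_summable:
  assumes "u \<in> Dstar a b" "v \<in> Dstar a b"
  shows "(\<lambda>k. Lact a b u k * v k - u k * Lact a b v k) summable_on UNIV"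
  using assms by (intro summable_on_diff l2_mult_summable) (auto simp: Dstar_def)

lemma green_formula:
  assumes "u \<in> Dstar a b" "v \<in> Dstar a b"
  shows "l2_inner (Lact a b u) v - l2_inner u (Lact a b v) = boundary_form a b (\<lambda>k. cnj (u k)) v"
proof -
  have "(\<lambda>k. cnj (Lact a b u k) * v k) summable_on UNIV" "(\<lambda>k. cnj (u k) * Lact a b v k) summable_on UNIV"
    using assms by (auto intro!: l2_mult_summable l2_cnj simp: Dstar_def)
  then show ?thesis
    unfolding l2_inner_def boundary_form_def Lact_cnj by (simp add: infsum_diff)
qed

lemma boundary_form_antisym: "boundary_form a b u v = - boundary_form a b v u"
proof -
  have swap: "(\<lambda>k. Lact a b u k * v k - u k * Lact a b v k) = (\<lambda>k. - (Lact a b v k * u k - v k * Lact a b u k))"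
    by (simp add: fun_eq_iff algebra_simps)
  show ?thesis
    unfolding boundary_form_def swap infsum_uminus ..
qed

lemma boundary_form_cnj:
  "boundary_form a b (\<lambda>k. cnj (u k)) (\<lambda>k. cnj (v k)) = cnj (boundary_form a b u v)"
  unfolding boundary_form_def Lact_cnj by (simp flip: infsum_cnj)

lemma boundary_form_lincomb_right:
  assumes "u \<in> Dstar a b" "v \<in> Dstar a b" "w \<in> Dstar a b"
  shows "boundary_form a b u (\<lambda>k. c * v k + d * w k) = c * boundary_form a b u v + d * boundary_form a b u w"
proof -
  have "(\<lambda>k. Lact a b u k * (c * v k + d * w k) - u k * Lact a b (\<lambda>k. c * v k + d * w k) k)
      = (\<lambda>k. c * (Lact a b u k * v k - u k * Lact a b v k) + d * (Lact a b u k * w k - u k * Lact a b w k))"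
    by (simp add: Lact_lincomb fun_eq_iff algebra_simps)
  then show ?thesis
    using boundary_form_summable[OF assms(1,2)] boundary_form_summable[OF assms(1,3)]
    unfolding boundary_form_def
    by (simp add: infsum_add summable_on_cmult_right infsum_cmult_right')
qed

lemma Lact_eq_if_adjoint:
  assumes "fin_seq \<subseteq> DA" "\<And>u. u \<in> fin_seq \<Longrightarrow> A u = Lact a b u"
    and "\<And>u. u \<in> DA \<Longrightarrow> l2_inner (A u) w = l2_inner u z"
  shows "Lact a b w = z"
proof (rule fin_seq_l2_inner_ext)
  fix u :: "int \<Rightarrow> complex"
  assume "u \<in> fin_seq"
  then have "l2_inner u (Lact a b w) = l2_inner (A u) w"
    using assms(2) Lact_symmetric_fin_seq[of u a b w] by simp
  also have "\<dots> = l2_inner u z"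
    using assms(1,3) \<open>u \<in> fin_seq\<close> by blast
  finally show "l2_inner u (Lact a b w) = l2_inner u z" .
qed

definition boundary_lagrangian :: "(int \<Rightarrow> real) \<Rightarrow> (int \<Rightarrow> real) \<Rightarrow> (int \<Rightarrow> complex) set \<Rightarrow> bool" where
  "boundary_lagrangian a b DA \<longleftrightarrow> DA \<subseteq> Dstar a b \<and>
     (\<forall>w \<in> Dstar a b. w \<in> DA \<longleftrightarrow> (\<forall>u \<in> DA. boundary_form a b (\<lambda>k. cnj (u k)) w = 0))"

lemma boundary_lagrangian_isotropic:
  "boundary_lagrangian a b DA \<Longrightarrow> u \<in> DA \<Longrightarrow> w \<in> DA \<Longrightarrow> boundary_form a b (\<lambda>k. cnj (u k)) w = 0"
  unfolding boundary_lagrangian_def by blast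

lemma boundary_lagrangian_subset_eq:
  assumes "boundary_lagrangian a b DA" "boundary_lagrangian a b DB" "DA \<subseteq> DB"
  shows "DA = DB"
proof
  show "DB \<subseteq> DA"
  proof
    fix w
    assume "w \<in> DB"
    then have "w \<in> Dstar a b" "\<forall>u \<in> DA. boundary_form a b (\<lambda>k. cnj (u k)) w = 0"
      using assms boundary_lagrangian_isotropic[OF assms(2)] by (auto simp: boundary_lagrangian_def)
    then show "w \<in> DA"
      using assms(1) by (simp add: boundary_lagrangian_def)
  qed
qed (use assms in simp)

lemma self_adjoint_ext_imp_lagrangian:
  assumes "self_adjoint_ext (Lact a b) fin_seq A DA"
  shows "boundary_lagrangian a b DA" "\<forall>v\<in>DA. A v = Lact a b v"
proof -
  have fin: "fin_seq \<subseteq> DA" and "DA \<subseteq> l2" and A_fin: "\<And>v. v \<in> fin_seq \<Longrightarrow> A v = Lact a b v"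
    and dom: "adj_dom A DA = DA" and adj: "\<And>w. w \<in> DA \<Longrightarrow> adj A DA w = A w"
    using assms unfolding self_adjoint_ext_def by auto
  have A: "A w = Lact a b w" "A w \<in> l2" if "w \<in> DA" for w
  proof -
    have "w \<in> adj_dom A DA"
      using that dom by simp
    from adj_spec[OF this] show "A w = Lact a b w" "A w \<in> l2"
      using Lact_eq_if_adjoint[OF fin A_fin] adj[OF that] by auto
  qed
  then have DA_sub: "DA \<subseteq> Dstar a b"
    using \<open>DA \<subseteq> l2\<close> by (auto simp: Dstar_def)
  have green: "l2_inner (A u) w = l2_inner u (Lact a b w) \<longleftrightarrow> boundary_form a b (\<lambda>k. cnj (u k)) w = 0"
    if "u \<in> DA" "w \<in> Dstar a b" for u w
    using green_formula[of u a b w] that A DA_sub by auto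
  show "\<forall>v\<in>DA. A v = Lact a b v"
    using A by blast
  have "w \<in> DA \<longleftrightarrow> (\<forall>u\<in>DA. boundary_form a b (\<lambda>k. cnj (u k)) w = 0)" if "w \<in> Dstar a b" for w
  proof
    assume "w \<in> DA"
    then show "\<forall>u\<in>DA. boundary_form a b (\<lambda>k. cnj (u k)) w = 0"
      using adj_spec(2)[of w A DA] dom adj A green that by auto
  next
    assume "\<forall>u\<in>DA. boundary_form a b (\<lambda>k. cnj (u k)) w = 0"
    then have "w \<in> adj_dom A DA"
      using that green by (intro adj_eqI(1)[OF fin, where z = "Lact a b w"]) (auto simp: Dstar_def)
    then show "w \<in> DA"
      using dom by simp
  qed
  then show "boundary_lagrangian a b DA"
    using DA_sub by (simp add: boundary_lagrangian_def)
qed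

lemma lagrangian_imp_self_adjoint_ext:
  assumes fin: "fin_seq \<subseteq> DA" and lag: "boundary_lagrangian a b DA" and A: "\<forall>v\<in>DA. A v = Lact a b v"
  shows "self_adjoint_ext (Lact a b) fin_seq A DA"
proof -
  have DA_sub: "DA \<subseteq> Dstar a b"
    using lag by (simp add: boundary_lagrangian_def)
  have green: "l2_inner (A u) w = l2_inner u (Lact a b w) \<longleftrightarrow> boundary_form a b (\<lambda>k. cnj (u k)) w = 0"
    if "u \<in> DA" "w \<in> Dstar a b" for u w
    using green_formula[of u a b w] that A DA_sub by auto
  have adj_DA: "w \<in> adj_dom A DA \<and> adj A DA w = A w" if "w \<in> DA" for w
  proof -
    have "w \<in> Dstar a b"
      using that DA_sub by auto
    moreover have "l2_inner (A u) w = l2_inner u (Lact a b w)" if "u \<in> DA" for u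
      using green[OF that \<open>w \<in> Dstar a b\<close>] lag \<open>w \<in> DA\<close> that by (auto simp: boundary_lagrangian_def)
    ultimately show ?thesis
      using adj_eqI[OF fin, where z = "Lact a b w"] A that by (auto simp: Dstar_def)
  qed
  have "adj_dom A DA \<subseteq> DA"
  proof
    fix w
    assume "w \<in> adj_dom A DA"
    then obtain z where "w \<in> l2" "z \<in> l2" and z: "\<And>u. u \<in> DA \<Longrightarrow> l2_inner (A u) w = l2_inner u z"
      unfolding adj_dom_def by blast
    then have "Lact a b w = z"
      using fin A by (intro Lact_eq_if_adjoint) auto
    then have "w \<in> Dstar a b"
      using \<open>w \<in> l2\<close> \<open>z \<in> l2\<close> by (simp add: Dstar_def)
    then show "w \<in> DA"
      using lag green z \<open>Lact a b w = z\<close> by (auto simp: boundary_lagrangian_def)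
  qed
  then show ?thesis
    using fin DA_sub A adj_DA unfolding self_adjoint_ext_def by (auto simp: Dstar_def)
qed

lemma self_adjoint_ext_iff_lagrangian:
  "self_adjoint_ext (Lact a b) fin_seq A DA
     \<longleftrightarrow> fin_seq \<subseteq> DA \<and> boundary_lagrangian a b DA \<and> (\<forall>v\<in>DA. A v = Lact a b v)"
  using self_adjoint_ext_imp_lagrangian lagrangian_imp_self_adjoint_ext
  by (metis self_adjoint_ext_def)

lemma sum_norm_mult_le_sqrt:
  "(\<Sum>i\<in>A. cmod (x i) * cmod (y i)) \<le> sqrt (\<Sum>i\<in>A. (cmod (x i))\<^sup>2) * sqrt (\<Sum>i\<in>A. (cmod (y i))\<^sup>2)"
  using L2_set_mult_ineq[where f = "\<lambda>i. cmod (x i)" and g = "\<lambda>i. cmod (y i)" and A = A]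
  by (simp add: L2_set_def)

lemma summable_norm_mult_of_sq:
  fixes x y :: "nat \<Rightarrow> complex"
  assumes "summable (\<lambda>n. (cmod (x n))\<^sup>2)" "summable (\<lambda>n. (cmod (y n))\<^sup>2)"
  shows "summable (\<lambda>n. cmod (x n) * cmod (y n))"
proof (rule summable_comparison_test')
  show "summable (\<lambda>n. ((cmod (x n))\<^sup>2 + (cmod (y n))\<^sup>2) / 2)"
    using summable_add[OF assms] by (rule summable_divide)
  show "norm (cmod (x n) * cmod (y n)) \<le> ((cmod (x n))\<^sup>2 + (cmod (y n))\<^sup>2) / 2" for n
    using sum_squares_bound[of "cmod (x n)" "cmod (y n)"] by simp
qed

lemma summable_mult_of_sq:
  fixes x y :: "nat \<Rightarrow> complex"
  assumes "summable (\<lambda>n. (cmod (x n))\<^sup>2)" "summable (\<lambda>n. (cmod (y n))\<^sup>2)"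
  shows "summable (\<lambda>n. x n * y n)"
  by (rule summable_comparison_test'[OF summable_norm_mult_of_sq[OF assms]]) (simp add: norm_mult)

lemma suminf_norm_mult_le_sqrt:
  fixes x y :: "nat \<Rightarrow> complex"
  assumes sx: "summable (\<lambda>n. (cmod (x n))\<^sup>2)" and sy: "summable (\<lambda>n. (cmod (y n))\<^sup>2)"
  shows "(\<Sum>n. cmod (x n) * cmod (y n)) \<le> sqrt (\<Sum>n. (cmod (x n))\<^sup>2) * sqrt (\<Sum>n. (cmod (y n))\<^sup>2)"
proof (rule suminf_le_const[OF summable_norm_mult_of_sq[OF sx sy]])
  fix N
  have "(\<Sum>n<N. cmod (x n) * cmod (y n)) \<le> sqrt (\<Sum>n<N. (cmod (x n))\<^sup>2) * sqrt (\<Sum>n<N. (cmod (y n))\<^sup>2)"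
    by (rule sum_norm_mult_le_sqrt)
  also have "\<dots> \<le> sqrt (\<Sum>n. (cmod (x n))\<^sup>2) * sqrt (\<Sum>n. (cmod (y n))\<^sup>2)"
    by (intro mult_mono real_sqrt_le_mono sum_le_suminf sx sy real_sqrt_ge_zero suminf_nonneg sum_nonneg) auto
  finally show "(\<Sum>n<N. cmod (x n) * cmod (y n)) \<le> sqrt (\<Sum>n. (cmod (x n))\<^sup>2) * sqrt (\<Sum>n. (cmod (y n))\<^sup>2)" .
qed

lemma tendsto_of_summable_diff:
  fixes X g :: "nat \<Rightarrow> 'a :: real_normed_vector"
  assumes "\<And>n. X n - X (Suc n) = g n" "summable g"
  shows "X \<longlonglongrightarrow> X 0 - suminf g"
proof -
  have "(\<lambda>n. X 0 - (\<Sum>j<n. g j)) \<longlonglongrightarrow> X 0 - suminf g"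
    by (intro tendsto_diff tendsto_const summable_LIMSEQ assms(2))
  moreover have "(\<lambda>n. X 0 - (\<Sum>j<n. g j)) = X"
    using sum_lessThan_telescope'[of X] by (simp add: assms(1) fun_eq_iff)
  ultimately show ?thesis
    by simp
qed

lemma telescoping_tail_sums:
  fixes X g :: "nat \<Rightarrow> 'a :: real_normed_vector"
  assumes "X \<longlonglongrightarrow> 0" "\<And>n. X n - X (Suc n) = g n"
  shows "(\<lambda>j. g (j + n)) sums X n"
  using telescope_sums'[OF LIMSEQ_ignore_initial_segment[OF assms(1), of n]] by (simp add: assms(2))

definition sq_tail :: "(nat \<Rightarrow> complex) \<Rightarrow> nat \<Rightarrow> real" where
  "sq_tail g n = (\<Sum>j. (cmod (g (j + n)))\<^sup>2)"

lemma sq_tail_nonneg: "summable (\<lambda>n. (cmod (g n))\<^sup>2) \<Longrightarrow> 0 \<le> sq_tail g n"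
  unfolding sq_tail_def by (intro suminf_nonneg summable_ignore_initial_segment) auto

lemma sq_tail_tendsto_zero: "summable (\<lambda>n. (cmod (g n))\<^sup>2) \<Longrightarrow> sq_tail g \<longlonglongrightarrow> 0"
  unfolding sq_tail_def by (rule suminf_exist_split2)

lemma norm_telescoping_tail_le:
  fixes X f g :: "nat \<Rightarrow> complex"
  assumes "X \<longlonglongrightarrow> 0" "\<And>n. X n - X (Suc n) = f n * g n"
    and sf: "summable (\<lambda>n. (cmod (f n))\<^sup>2)" and sg: "summable (\<lambda>n. (cmod (g n))\<^sup>2)"
  shows "cmod (X n) \<le> sqrt (sq_tail f n) * sqrt (sq_tail g n)"
proof -
  have sf': "summable (\<lambda>j. (cmod (f (j + n)))\<^sup>2)"
    using summable_ignore_initial_segment[OF sf] .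
  have sg': "summable (\<lambda>j. (cmod (g (j + n)))\<^sup>2)"
    using summable_ignore_initial_segment[OF sg] .
  have "(\<lambda>j. f (j + n) * g (j + n)) sums X n"
    by (rule telescoping_tail_sums) (use assms in auto)
  then have "X n = (\<Sum>j. f (j + n) * g (j + n))"
    by (simp add: sums_iff)
  also have "cmod \<dots> \<le> (\<Sum>j. cmod (f (j + n) * g (j + n)))"
    using summable_norm_mult_of_sq[OF sf' sg'] by (intro summable_norm) (simp add: norm_mult)
  also have "\<dots> = (\<Sum>j. cmod (f (j + n)) * cmod (g (j + n)))"
    by (simp add: norm_mult)
  also have "\<dots> \<le> sqrt (sq_tail f n) * sqrt (sq_tail g n)"
    unfolding sq_tail_def by (rule suminf_norm_mult_le_sqrt[OF sf' sg'])
  finally show ?thesis .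
qed

lemma norm_recursion_le:
  fixes E f \<epsilon> :: "nat \<Rightarrow> complex"
  assumes E: "\<And>n. E (Suc n) = E n - f n * \<epsilon> n" and "n \<le> N"
  shows "cmod (E n) \<le> cmod (E 0) + sqrt (\<Sum>j<N. (cmod (f j))\<^sup>2) * sqrt (\<Sum>j<N. (cmod (\<epsilon> j))\<^sup>2)"
proof -
  have "E n = E 0 - (\<Sum>j<n. f j * \<epsilon> j)"
    using sum_lessThan_telescope'[of E n] by (simp add: E)
  then have "cmod (E n) \<le> cmod (E 0) + cmod (\<Sum>j<n. f j * \<epsilon> j)"
    using norm_triangle_ineq4 by simp
  also have "cmod (\<Sum>j<n. f j * \<epsilon> j) \<le> (\<Sum>j<n. cmod (f j) * cmod (\<epsilon> j))"
    by (rule order_trans[OF norm_sum]) (simp add: norm_mult)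
  also have "\<dots> \<le> sqrt (\<Sum>j<n. (cmod (f j))\<^sup>2) * sqrt (\<Sum>j<n. (cmod (\<epsilon> j))\<^sup>2)"
    by (rule sum_norm_mult_le_sqrt)
  also have "\<dots> \<le> sqrt (\<Sum>j<N. (cmod (f j))\<^sup>2) * sqrt (\<Sum>j<N. (cmod (\<epsilon> j))\<^sup>2)"
    using \<open>n \<le> N\<close> by (intro mult_mono real_sqrt_le_mono sum_mono2 real_sqrt_ge_zero sum_nonneg) auto
  finally show ?thesis
    by simp
qed

lemma sq_le_three_sum_sq:
  fixes x p q r :: real
  assumes "0 \<le> x" "x \<le> p + q + r"
  shows "x\<^sup>2 \<le> 3 * (p\<^sup>2 + q\<^sup>2 + r\<^sup>2)"
proof -
  have "x\<^sup>2 \<le> (p + q + r)\<^sup>2"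
    using assms by (simp add: power_mono)
  also have "\<dots> \<le> 3 * (p\<^sup>2 + q\<^sup>2 + r\<^sup>2)"
    using sum_squares_bound[of p q] sum_squares_bound[of p r] sum_squares_bound[of q r]
    by (simp add: power2_eq_square algebra_simps)
  finally show ?thesis .
qed

lemma coupled_recursion_pointwise:
  fixes u \<phi> \<epsilon> f P E :: "nat \<Rightarrow> complex" and \<kappa> :: complex and c F :: real
  assumes E: "\<And>n. E (Suc n) = E n - f n * \<epsilon> n"
    and eq: "\<kappa> * u n = \<phi> n * E n - \<epsilon> n * P n"
    and "0 < c" "c \<le> cmod (P n)" "n < N"
    and F: "(\<Sum>j<N. (cmod (f j))\<^sup>2) \<le> F"
  shows "c\<^sup>2 * (cmod (\<epsilon> n))\<^sup>2 \<le> 3 * ((cmod (E 0))\<^sup>2 * (cmod (\<phi> n))\<^sup>2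
           + F * (\<Sum>j<N. (cmod (\<epsilon> j))\<^sup>2) * (cmod (\<phi> n))\<^sup>2 + (cmod \<kappa>)\<^sup>2 * (cmod (u n))\<^sup>2)"
proof -
  define T where "T = (\<Sum>j<N. (cmod (\<epsilon> j))\<^sup>2)"
  have "0 \<le> F" "0 \<le> T"
    using F order_trans[OF sum_nonneg F] by (auto simp: T_def intro: sum_nonneg)
  have "cmod (E n) \<le> cmod (E 0) + sqrt (\<Sum>j<N. (cmod (f j))\<^sup>2) * sqrt T"
    unfolding T_def using \<open>n < N\<close> by (intro norm_recursion_le E) simp
  also have "\<dots> \<le> cmod (E 0) + sqrt F * sqrt T"
    using F \<open>0 \<le> T\<close> by (intro add_left_mono mult_right_mono real_sqrt_le_mono) auto
  finally have E_bound: "cmod (E n) \<le> cmod (E 0) + sqrt F * sqrt T" .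
  have "\<epsilon> n * P n = \<phi> n * E n - \<kappa> * u n"
    using eq by (simp add: algebra_simps)
  have "c * cmod (\<epsilon> n) \<le> cmod (\<epsilon> n) * cmod (P n)"
    using mult_left_mono[OF \<open>c \<le> cmod (P n)\<close>, of "cmod (\<epsilon> n)"] by (simp add: mult.commute)
  also have "\<dots> = cmod (\<phi> n * E n - \<kappa> * u n)"
    by (simp only: norm_mult[symmetric] \<open>\<epsilon> n * P n = \<phi> n * E n - \<kappa> * u n\<close>)
  also have "\<dots> \<le> cmod (\<phi> n) * cmod (E n) + cmod \<kappa> * cmod (u n)"
    using norm_triangle_ineq4[of "\<phi> n * E n" "\<kappa> * u n"] by (simp add: norm_mult)
  also have "\<dots> \<le> cmod (\<phi> n) * cmod (E 0) + cmod (\<phi> n) * (sqrt F * sqrt T) + cmod \<kappa> * cmod (u n)"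
    using mult_left_mono[OF E_bound, of "cmod (\<phi> n)"] by (simp add: algebra_simps)
  finally have "(c * cmod (\<epsilon> n))\<^sup>2 \<le> 3 * ((cmod (\<phi> n) * cmod (E 0))\<^sup>2
      + (cmod (\<phi> n) * (sqrt F * sqrt T))\<^sup>2 + (cmod \<kappa> * cmod (u n))\<^sup>2)"
    using \<open>0 < c\<close> by (intro sq_le_three_sum_sq) auto
  then show ?thesis
    using \<open>0 \<le> F\<close> \<open>0 \<le> T\<close> by (simp add: T_def algebra_simps)
qed

lemma square_summable_of_coupled_recursion_small:
  fixes u \<phi> \<epsilon> f P E :: "nat \<Rightarrow> complex" and \<kappa> :: complex and c :: real
  assumes su: "summable (\<lambda>n. (cmod (u n))\<^sup>2)" and s\<phi>: "summable (\<lambda>n. (cmod (\<phi> n))\<^sup>2)"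
    and sf: "summable (\<lambda>n. (cmod (f n))\<^sup>2)"
    and c: "c > 0" and P: "\<And>n. c \<le> cmod (P n)"
    and small: "6 * (\<Sum>n. (cmod (f n))\<^sup>2) * (\<Sum>n. (cmod (\<phi> n))\<^sup>2) \<le> c\<^sup>2"
    and E: "\<And>n. E (Suc n) = E n - f n * \<epsilon> n"
    and eq: "\<And>n. \<kappa> * u n = \<phi> n * E n - \<epsilon> n * P n"
  shows "summable (\<lambda>n. (cmod (\<epsilon> n))\<^sup>2)"
proof -
  define F where "F = (\<Sum>n. (cmod (f n))\<^sup>2)"
  define \<Phi> where "\<Phi> = (\<Sum>n. (cmod (\<phi> n))\<^sup>2)"
  define C where "C = 3 * (cmod (E 0))\<^sup>2 * \<Phi> + 3 * (cmod \<kappa>)\<^sup>2 * (\<Sum>n. (cmod (u n))\<^sup>2)"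
  have partial: "(\<Sum>n<N. (cmod (\<epsilon> n))\<^sup>2) \<le> 2 * C / c\<^sup>2" for N
  proof -
    define T where "T = (\<Sum>n<N. (cmod (\<epsilon> n))\<^sup>2)"
    have "F \<ge> 0" "T \<ge> 0" "(\<Sum>j<N. (cmod (f j))\<^sup>2) \<le> F"
      unfolding F_def T_def by (intro suminf_nonneg sum_nonneg sum_le_suminf sf; simp)+
    have "c\<^sup>2 * T = (\<Sum>n<N. c\<^sup>2 * (cmod (\<epsilon> n))\<^sup>2)"
      unfolding T_def by (simp add: sum_distrib_left)
    also have "\<dots> \<le> (\<Sum>n<N. 3 * ((cmod (E 0))\<^sup>2 * (cmod (\<phi> n))\<^sup>2
        + F * T * (cmod (\<phi> n))\<^sup>2 + (cmod \<kappa>)\<^sup>2 * (cmod (u n))\<^sup>2))"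
      unfolding T_def using c P \<open>(\<Sum>j<N. (cmod (f j))\<^sup>2) \<le> F\<close>
      by (intro sum_mono coupled_recursion_pointwise[where u = u and \<phi> = \<phi> and P = P, OF E eq]) auto
    also have "\<dots> = 3 * (cmod (E 0))\<^sup>2 * (\<Sum>n<N. (cmod (\<phi> n))\<^sup>2)
        + 3 * F * T * (\<Sum>n<N. (cmod (\<phi> n))\<^sup>2) + 3 * (cmod \<kappa>)\<^sup>2 * (\<Sum>n<N. (cmod (u n))\<^sup>2)"
      by (simp add: sum.distrib sum_distrib_left algebra_simps)
    also have "\<dots> \<le> 3 * (cmod (E 0))\<^sup>2 * \<Phi> + 3 * F * T * \<Phi> + 3 * (cmod \<kappa>)\<^sup>2 * (\<Sum>n. (cmod (u n))\<^sup>2)"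
      unfolding \<Phi>_def using \<open>F \<ge> 0\<close> \<open>T \<ge> 0\<close>
      by (intro add_mono mult_left_mono sum_le_suminf s\<phi> su; simp)+
    also have "\<dots> = C + 3 * F * \<Phi> * T"
      by (simp add: C_def algebra_simps)
    \<comment> \<open>The smallness hypothesis absorbs the feedback of \<open>\<epsilon>\<close> through \<open>E\<close>.\<close>
    also have "3 * F * \<Phi> * T \<le> c\<^sup>2 / 2 * T"
      using small \<open>T \<ge> 0\<close> unfolding F_def \<Phi>_def by (intro mult_right_mono) auto
    finally show ?thesis
      unfolding T_def[symmetric] using c by (simp add: field_simps)
  qed
  show ?thesis
  proof (rule bounded_imp_summable)
    show "(\<Sum>k\<le>n. (cmod (\<epsilon> k))\<^sup>2) \<le> 2 * C / c\<^sup>2" for n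
      using partial[of "Suc n"] by (simp add: lessThan_Suc_atMost)
  qed simp
qed

lemma square_summable_of_coupled_recursion:
  fixes u \<phi> \<epsilon> f P E :: "nat \<Rightarrow> complex" and \<kappa> p :: complex
  assumes su: "summable (\<lambda>n. (cmod (u n))\<^sup>2)" and s\<phi>: "summable (\<lambda>n. (cmod (\<phi> n))\<^sup>2)"
    and sf: "summable (\<lambda>n. (cmod (f n))\<^sup>2)"
    and P: "P \<longlonglongrightarrow> p" and "p \<noteq> 0"
    and E: "\<And>n. E (Suc n) = E n - f n * \<epsilon> n"
    and eq: "\<And>n. \<kappa> * u n = \<phi> n * E n - \<epsilon> n * P n"
  shows "summable (\<lambda>n. (cmod (\<epsilon> n))\<^sup>2)"
proof -
  define c where "c = cmod p / 2"
  define \<Phi> where "\<Phi> = (\<Sum>n. (cmod (\<phi> n))\<^sup>2)"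
  have "c > 0" "\<Phi> \<ge> 0"
    using \<open>p \<noteq> 0\<close> by (simp_all add: c_def \<Phi>_def suminf_nonneg s\<phi>)
  have "\<forall>\<^sub>F n in sequentially. c < cmod (P n)"
    using \<open>p \<noteq> 0\<close> by (intro order_tendstoD(1)[OF tendsto_norm[OF P]]) (simp add: c_def)
  moreover have "\<forall>\<^sub>F K in sequentially. sq_tail f K < c\<^sup>2 / (6 * (\<Phi> + 1))"
    using \<open>c > 0\<close> \<open>\<Phi> \<ge> 0\<close> by (intro order_tendstoD(2)[OF sq_tail_tendsto_zero[OF sf]]) simp
  ultimately have "\<forall>\<^sub>F n in sequentially. c < cmod (P n) \<and> sq_tail f n < c\<^sup>2 / (6 * (\<Phi> + 1))"
    by (rule eventually_conj)
  then obtain K where K: "\<And>n. K \<le> n \<Longrightarrow> c < cmod (P n) \<and> sq_tail f n < c\<^sup>2 / (6 * (\<Phi> + 1))"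
    unfolding eventually_sequentially by blast
  then have K1: "\<And>n. K \<le> n \<Longrightarrow> c < cmod (P n)" and K2: "sq_tail f K < c\<^sup>2 / (6 * (\<Phi> + 1))"
    by auto
  have "sq_tail \<phi> K \<le> \<Phi>"
    unfolding sq_tail_def \<Phi>_def using suminf_split_initial_segment[OF s\<phi>, of K]
    by (simp add: sum_nonneg)
  then have "6 * sq_tail f K * sq_tail \<phi> K \<le> 6 * sq_tail f K * (\<Phi> + 1)"
    using sq_tail_nonneg[OF sf] by (intro mult_left_mono) auto
  also have "\<dots> \<le> c\<^sup>2"
    using K2 \<open>\<Phi> \<ge> 0\<close> by (simp add: field_simps)
  finally have small: "6 * sq_tail f K * sq_tail \<phi> K \<le> c\<^sup>2" .
  have "summable (\<lambda>n. (cmod (\<epsilon> (n + K)))\<^sup>2)"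
  proof (rule square_summable_of_coupled_recursion_small[where u = "\<lambda>n. u (n + K)"
        and \<phi> = "\<lambda>n. \<phi> (n + K)" and f = "\<lambda>n. f (n + K)" and P = "\<lambda>n. P (n + K)"
        and E = "\<lambda>n. E (n + K)" and \<kappa> = \<kappa> and c = c])
    show "6 * (\<Sum>n. (cmod (f (n + K)))\<^sup>2) * (\<Sum>n. (cmod (\<phi> (n + K)))\<^sup>2) \<le> c\<^sup>2"
      using small by (simp add: sq_tail_def)
    show "c \<le> cmod (P (n + K))" for n
      using K1[of "n + K"] by simp
  qed (use summable_ignore_initial_segment[OF su] summable_ignore_initial_segment[OF s\<phi>]
      summable_ignore_initial_segment[OF sf] \<open>c > 0\<close> E eq in simp_all)
  then show ?thesis
    using summable_iff_shift[of "\<lambda>n. (cmod (\<epsilon> n))\<^sup>2" K] by simp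
qed

lemma tendsto_sum_symmetric_infsum:
  fixes g :: "int \<Rightarrow> 'a :: {topological_comm_monoid_add, t2_space}"
  assumes "g summable_on UNIV"
  shows "(\<lambda>N. \<Sum>k\<in>{- int N..int N}. g k) \<longlonglongrightarrow> infsum g UNIV"
proof -
  have "filterlim (\<lambda>N. {- int N..int N}) (finite_subsets_at_top UNIV) sequentially"
    unfolding filterlim_finite_subsets_at_top
  proof (intro allI impI)
    fix X :: "int set"
    assume "finite X \<and> X \<subseteq> UNIV"
    then obtain M where M: "abs ` X \<subseteq> {..M}"
      unfolding finite_int_iff_bounded_le by blast
    have "X \<subseteq> {- int N..int N}" if "nat M \<le> N" for N
      using M that by (force simp: image_subset_iff abs_le_iff)
    then show "\<forall>\<^sub>F N in sequentially. finite {- int N..int N} \<and> X \<subseteq> {- int N..int N} \<and> {- int N..int N} \<subseteq> UNIV"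
      unfolding eventually_sequentially by blast
  qed
  then show ?thesis
    using has_sum_infsum[OF assms] unfolding has_sum_def by (rule filterlim_compose[rotated])
qed

section \<open>The limit point case at \<open>-\<infinity>\<close>\<close>

definition residual_tail :: "(int \<Rightarrow> real) \<Rightarrow> (int \<Rightarrow> real) \<Rightarrow> (int \<Rightarrow> complex) \<Rightarrow> complex \<Rightarrow> nat \<Rightarrow> real" where
  "residual_tail a b x c = sq_tail (reflect (\<lambda>k. Lact a b x k - c * x k))"

lemma residual_tail_nonneg: "x \<in> Dstar a b \<Longrightarrow> 0 \<le> residual_tail a b x c n"
  unfolding residual_tail_def by (intro sq_tail_nonneg reflect_l2 Dstar_shifted_l2)

lemma residual_tail_tendsto_zero: "x \<in> Dstar a b \<Longrightarrow> residual_tail a b x c \<longlonglongrightarrow> 0"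
  unfolding residual_tail_def by (intro sq_tail_tendsto_zero reflect_l2 Dstar_shifted_l2)

lemma norm_reflect_wronskian_le:
  assumes "x \<in> Dstar a b" "v \<in> l2" "Lact a b v = (\<lambda>k. c * v k)"
    and "(\<lambda>N. wronskian a x v (- int N)) \<longlonglongrightarrow> 0"
  shows "cmod (reflect (wronskian a x v) n) \<le> sqrt (residual_tail a b x c n) * sqrt (sq_tail (reflect v) n)"
  unfolding residual_tail_def
proof (rule norm_telescoping_tail_le)
  show "reflect (wronskian a x v) \<longlonglongrightarrow> 0"
    using assms(4) by (simp add: tendsto_reflect_iff)
  show "reflect (wronskian a x v) n - reflect (wronskian a x v) (Suc n)
      = reflect (\<lambda>k. Lact a b x k - c * x k) n * reflect v n" for n
    using assms(3) by (intro wronskian_diff_reflect_eigen) simp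
qed (use assms reflect_l2 Dstar_shifted_l2 in auto)

lemma sq_tail_reflect_pos:
  assumes "\<And>k. a k > 0" "y \<in> l2" "Lact a b y = (\<lambda>k. c * y k)" "y \<noteq> (\<lambda>k. 0)"
  shows "0 < sq_tail (reflect y) n"
proof -
  define m where "m = - int n - 2"
  have "reflect y n = y (m + 1)" "reflect y (Suc n) = y m"
    unfolding reflect_def m_def by (rule arg_cong[where f = y], simp)+
  then have "reflect y n \<noteq> 0 \<or> reflect y (Suc n) \<noteq> 0"
    using Lact_eigen_eq_zero[OF assms(1,3), of m] assms(4) by auto
  then obtain j where "reflect y (j + n) \<noteq> 0"
    by (metis add_0 add_Suc)
  then have "\<exists>j. 0 < (cmod (reflect y (j + n)))\<^sup>2"
    by auto
  then show ?thesis
    unfolding sq_tail_def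
    by (subst suminf_pos_iff) (use summable_ignore_initial_segment[OF reflect_l2[OF assms(2)]] in auto)
qed

locale jacobi_left_limit_point =
  fixes a b :: "int \<Rightarrow> real"
  assumes a_pos: "\<And>k. a k > 0"
    and Jminus_def00: "def_indices_00 (Jminus a b) fin_seq"
begin

lemma reflect_eigen_eq_zero:
  assumes eigen: "\<And>k. k \<le> -1 \<Longrightarrow> Lact a b y k = \<i> * y k" and "y 0 = 0" and "reflect y \<in> l2"
  shows "reflect y = (\<lambda>j. 0)"
proof -
  have J: "Jminus a b (reflect y) = (\<lambda>j. \<i> * reflect y j)"
    using eigen by (simp add: Jminus_reflect[where a = a and b = b and y = y, OF \<open>y 0 = 0\<close>] reflect_def fun_eq_iff)
  have "l2_inner (Jminus a b u) (reflect y) = l2_inner u (\<lambda>j. \<i> * reflect y j)" if "u \<in> fin_seq" for u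
    by (simp add: Jminus_symmetric_fin_seq[OF that] J)
  from adj_eqI[OF order.refl \<open>reflect y \<in> l2\<close> l2_scale[OF \<open>reflect y \<in> l2\<close>] this]
  have "reflect y \<in> adj_eigspace (Jminus a b) fin_seq \<i>"
    by (simp add: adj_eigspace_def)
  then show ?thesis
    using Jminus_def00 by (simp add: def_indices_00_def dim0_def)
qed

lemma Lact_left_solution:
  assumes "k \<le> -1"
  shows "Lact a b (\<lambda>k. left_solution a b c (nat (- k))) k = c * left_solution a b c (nat (- k))"
proof -
  define n where "n = nat (- k - 1)"
  have k: "k = - int n - 1"
    using assms by (simp add: n_def)
  have "nat (- (k + 1)) = n" "nat (- k) = Suc n" "nat (- (k - 1)) = Suc (Suc n)"
    using k by simp_all
  moreover have "complex_of_real (a (- int n - 2)) \<noteq> 0"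
    using a_pos[of "- int n - 2"] by simp
  ultimately show ?thesis
    unfolding Lact_def by (simp add: k field_simps)
qed

lemma left_solution_not_l2: "\<not> summable (\<lambda>n. (cmod (left_solution a b \<i> (Suc n)))\<^sup>2)"
proof
  define y where "y k = left_solution a b \<i> (nat (- k))" for k
  have reflect_y: "reflect y n = left_solution a b \<i> (Suc n)" for n
    unfolding y_def[abs_def] by (rule reflect_left_solution)
  assume "summable (\<lambda>n. (cmod (left_solution a b \<i> (Suc n)))\<^sup>2)"
  then have "reflect y \<in> l2"
    by (simp add: l2_nat_iff reflect_y)
  then have "reflect y = (\<lambda>j. 0)"
    using Lact_left_solution[of _ \<i>] by (intro reflect_eigen_eq_zero) (simp_all add: y_def[abs_def])
  then show False
    using reflect_y[of 0] by (simp add: fun_eq_iff)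
qed

lemma wronskian_eigen_tendsto_left:
  assumes u: "u \<in> Dstar a b" and y: "y \<in> l2" "Lact a b y = (\<lambda>k. \<i> * y k)"
  shows "(\<lambda>N. wronskian a u y (- int N)) \<longlonglongrightarrow> 0"
proof -
  define e where "e k = left_solution a b \<i> (nat (- k))" for k
  have e_eigen: "Lact a b e k = \<i> * e k" if "k \<le> -1" for k
    using Lact_left_solution[OF that] by (simp add: e_def[abs_def])
  have y_eigen: "Lact a b y k = \<i> * y k" for k
    using y(2) by simp
  define f where "f = reflect (\<lambda>k. Lact a b u k - \<i> * u k)"
  define P where "P = reflect (wronskian a u y)"
  define E where "E = reflect (wronskian a u e)"
  define \<kappa> where "\<kappa> = wronskian a y e (-1)"
  have sf: "summable (\<lambda>n. (cmod (f n))\<^sup>2)"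
    unfolding f_def by (rule reflect_l2[OF Dstar_shifted_l2[OF u]])
  have sy: "summable (\<lambda>n. (cmod (reflect y n))\<^sup>2)"
    by (rule reflect_l2[OF y(1)])
  have P_diff: "P n - P (Suc n) = f n * reflect y n" for n
    unfolding P_def f_def by (rule wronskian_diff_reflect_eigen) (rule y_eigen)
  have E_diff: "E (Suc n) = E n - f n * reflect e n" for n
    using wronskian_diff_reflect_eigen[where a = a and b = b and v = e and c = \<i> and u = u and n = n, OF e_eigen]
    by (simp add: E_def f_def diff_eq_eq eq_diff_eq add.commute)
  have "reflect (wronskian a y e) n = \<kappa>" for n
    unfolding \<kappa>_def using y_eigen e_eigen by (rule reflect_wronskian_eigen_const)
  then have three_term: "\<kappa> * reflect u n = reflect y n * E n - reflect e n * P n" for n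
    using wronskian_three_term[of u "- int n - 1" a y e] by (simp add: E_def P_def reflect_def mult.commute)
  have P_lim: "P \<longlonglongrightarrow> P 0 - (\<Sum>n. f n * reflect y n)"
    by (intro tendsto_of_summable_diff P_diff summable_mult_of_sq sf sy)
  have "P 0 - (\<Sum>n. f n * reflect y n) = 0"
  proof (rule ccontr)
    assume "P 0 - (\<Sum>n. f n * reflect y n) \<noteq> 0"
    from square_summable_of_coupled_recursion[where u = "reflect u" and \<phi> = "reflect y"
        and \<epsilon> = "reflect e", OF reflect_l2[OF Dstar_l2[OF u]] sy sf P_lim this E_diff three_term]
    have "summable (\<lambda>n. (cmod (reflect e n))\<^sup>2)" .
    then show False
      using left_solution_not_l2 by (simp add: e_def[abs_def] reflect_left_solution)
  qed
  then show ?thesis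
    using P_lim by (simp add: P_def tendsto_reflect_iff)
qed

lemma wronskian_eigen_minus_tendsto_left:
  assumes u: "u \<in> Dstar a b" and y: "y \<in> l2" "Lact a b y = (\<lambda>k. - \<i> * y k)"
  shows "(\<lambda>N. wronskian a u y (- int N)) \<longlonglongrightarrow> 0"
proof -
  have "Lact a b (\<lambda>k. cnj (y k)) = (\<lambda>k. \<i> * cnj (y k))"
    using y(2) by (simp add: Lact_cnj)
  then have "(\<lambda>N. wronskian a (\<lambda>k. cnj (u k)) (\<lambda>k. cnj (y k)) (- int N)) \<longlonglongrightarrow> 0"
    using u y(1) by (intro wronskian_eigen_tendsto_left Dstar_cnj l2_cnj)
  then show ?thesis
    using tendsto_cnj by (fastforce simp: wronskian_cnj)
qed

lemma reflect_wronskian_cnj_eigen: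
  assumes y: "y \<in> l2" "Lact a b y = (\<lambda>k. \<i> * y k)"
  shows "reflect (wronskian a y (\<lambda>k. cnj (y k))) n = 2 * \<i> * of_real (sq_tail (reflect y) n)"
proof -
  have y_Dstar: "y \<in> Dstar a b"
    using y by (simp add: Dstar_def l2_scale)
  have ym: "(\<lambda>k. cnj (y k)) \<in> l2" "Lact a b (\<lambda>k. cnj (y k)) = (\<lambda>k. - \<i> * cnj (y k))"
    using y by (simp_all add: l2_cnj Lact_cnj)
  have "(\<lambda>j. 2 * \<i> * of_real ((cmod (reflect y (j + n)))\<^sup>2)) sums reflect (wronskian a y (\<lambda>k. cnj (y k))) n"
  proof (rule telescoping_tail_sums)
    show "reflect (wronskian a y (\<lambda>k. cnj (y k))) \<longlonglongrightarrow> 0"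
      using wronskian_eigen_minus_tendsto_left[OF y_Dstar ym] by (simp add: tendsto_reflect_iff)
    show "reflect (wronskian a y (\<lambda>k. cnj (y k))) m - reflect (wronskian a y (\<lambda>k. cnj (y k))) (Suc m)
        = 2 * \<i> * of_real ((cmod (reflect y m))\<^sup>2)" for m
      using wronskian_diff_reflect_eigen[where u = y and n = m, OF fun_cong[OF ym(2)]] y(2)
      by (simp add: reflect_def) (simp add: complex_norm_square[symmetric])
  qed
  moreover have "(\<lambda>j. 2 * \<i> * of_real ((cmod (reflect y (j + n)))\<^sup>2)) sums (2 * \<i> * of_real (sq_tail (reflect y) n))"
    unfolding sq_tail_def
    by (intro sums_mult sums_of_real summable_sums summable_ignore_initial_segment reflect_l2 y(1))
  ultimately show ?thesis
    by (rule sums_unique2)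
qed

lemma norm_reflect_wronskian_le_residuals:
  assumes u: "u \<in> Dstar a b" and v: "v \<in> Dstar a b"
    and y: "y \<in> l2" "Lact a b y = (\<lambda>k. \<i> * y k)" "y \<noteq> (\<lambda>k. 0)"
  shows "cmod (reflect (wronskian a u v) n)
           \<le> (sqrt (residual_tail a b u \<i> n) * sqrt (residual_tail a b v (- \<i>) n)
              + sqrt (residual_tail a b u (- \<i>) n) * sqrt (residual_tail a b v \<i> n)) / 2"
proof -
  define ym where "ym k = cnj (y k)" for k
  have ym: "ym \<in> l2" "Lact a b ym = (\<lambda>k. - \<i> * ym k)"
    using y by (simp_all add: ym_def[abs_def] l2_cnj Lact_cnj)
  define \<rho> where "\<rho> = sq_tail (reflect y) n"
  define R where "R x c = sqrt (residual_tail a b x c n)" for x c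
  have "0 < \<rho>"
    unfolding \<rho>_def using a_pos y by (rule sq_tail_reflect_pos)
  have "sq_tail (reflect ym) n = \<rho>"
    by (simp add: \<rho>_def sq_tail_def reflect_def ym_def)
  then have bound_ym: "cmod (reflect (wronskian a x ym) n) \<le> R x (- \<i>) * sqrt \<rho>" if "x \<in> Dstar a b" for x
    using norm_reflect_wronskian_le[OF that ym wronskian_eigen_minus_tendsto_left[OF that ym], where n = n]
    by (simp add: R_def)
  have bound_y: "cmod (reflect (wronskian a x y) n) \<le> R x \<i> * sqrt \<rho>" if "x \<in> Dstar a b" for x
    using norm_reflect_wronskian_le[OF that y(1,2) wronskian_eigen_tendsto_left[OF that y(1,2)], where n = n]
    by (simp add: R_def \<rho>_def)
  have "reflect (wronskian a u v) n * reflect (wronskian a y ym) n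
      = reflect (wronskian a u y) n * reflect (wronskian a v ym) n
        - reflect (wronskian a u ym) n * reflect (wronskian a v y) n"
    unfolding reflect_def by (rule wronskian_plucker)
  moreover have "cmod (reflect (wronskian a y ym) n) = 2 * \<rho>"
    using reflect_wronskian_cnj_eigen[OF y(1,2), of n] \<open>0 < \<rho>\<close>
    by (simp add: ym_def[abs_def] \<rho>_def norm_mult)
  ultimately have "cmod (reflect (wronskian a u v) n) * (2 * \<rho>)
      = cmod (reflect (wronskian a u y) n * reflect (wronskian a v ym) n
        - reflect (wronskian a u ym) n * reflect (wronskian a v y) n)"
    by (metis norm_mult)
  also have "\<dots> \<le> cmod (reflect (wronskian a u y) n) * cmod (reflect (wronskian a v ym) n)
      + cmod (reflect (wronskian a u ym) n) * cmod (reflect (wronskian a v y) n)"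
    by (rule order_trans[OF norm_triangle_ineq4]) (simp add: norm_mult)
  also have "\<dots> \<le> (R u \<i> * sqrt \<rho>) * (R v (- \<i>) * sqrt \<rho>) + (R u (- \<i>) * sqrt \<rho>) * (R v \<i> * sqrt \<rho>)"
    using u v \<open>0 < \<rho>\<close> residual_tail_nonneg
    by (intro add_mono mult_mono bound_y bound_ym) (auto simp: R_def)
  also have "\<dots> = (sqrt \<rho> * sqrt \<rho>) * (R u \<i> * R v (- \<i>) + R u (- \<i>) * R v \<i>)"
    by (simp add: algebra_simps del: real_sqrt_mult_self)
  finally have "\<rho> * (2 * cmod (reflect (wronskian a u v) n)) \<le> \<rho> * (R u \<i> * R v (- \<i>) + R u (- \<i>) * R v \<i>)"
    using \<open>0 < \<rho>\<close> by (simp add: mult_ac)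
  then show ?thesis
    using \<open>0 < \<rho>\<close> by (simp add: R_def mult_le_cancel_left_pos)
qed

lemma wronskian_tendsto_left:
  assumes u: "u \<in> Dstar a b" and v: "v \<in> Dstar a b"
    and y: "y \<in> l2" "Lact a b y = (\<lambda>k. \<i> * y k)" "y \<noteq> (\<lambda>k. 0)"
  shows "(\<lambda>N. wronskian a u v (- int N)) \<longlonglongrightarrow> 0"
proof -
  define G where "G n = (sqrt (residual_tail a b u \<i> n) * sqrt (residual_tail a b v (- \<i>) n)
    + sqrt (residual_tail a b u (- \<i>) n) * sqrt (residual_tail a b v \<i> n)) / 2" for n
  have "G \<longlonglongrightarrow> (sqrt 0 * sqrt 0 + sqrt 0 * sqrt 0) / 2"
    unfolding G_def using u v by (intro tendsto_intros residual_tail_tendsto_zero) auto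
  then have "G \<longlonglongrightarrow> 0"
    by simp
  moreover have "norm (reflect (wronskian a u v) n) \<le> G n" for n
    unfolding G_def by (rule norm_reflect_wronskian_le_residuals[OF u v y])
  ultimately have "reflect (wronskian a u v) \<longlonglongrightarrow> 0"
    by (blast intro: Lim_null_comparison[OF always_eventually])
  then show ?thesis
    by (simp add: tendsto_reflect_iff)
qed

end

section \<open>The domains \<open>\<D>\<^sub>\<theta>\<close>\<close>

lemma exists_angle_double:
  assumes "cmod z = 1"
  shows "\<exists>\<theta>\<in>{0..<2 * pi}. exp (\<i> * of_real \<theta>) * exp (\<i> * of_real \<theta>) = z"
proof -
  define t where "t = Arg z"
  have "z \<noteq> 0"
    using assms by auto
  then have z: "exp (\<i> * of_real t) = z"
    using cis_Arg[of z] assms by (simp add: t_def sgn_div_norm cis_conv_exp)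
  have t: "- pi < t" "t \<le> pi"
    using Arg_bounded[of z] by (auto simp: t_def)
  define \<theta> where "\<theta> = (if t \<ge> 0 then t / 2 else t / 2 + pi)"
  have "\<theta> \<in> {0..<2 * pi}"
    using t pi_gt_zero by (auto simp: \<theta>_def)
  moreover have "exp (\<i> * of_real \<theta>) * exp (\<i> * of_real \<theta>) = exp (\<i> * of_real t)"
  proof (cases "t \<ge> 0")
    case True
    then show ?thesis
      by (simp add: \<theta>_def exp_add[symmetric] algebra_simps)
  next
    case False
    then have "exp (\<i> * of_real \<theta>) * exp (\<i> * of_real \<theta>) = exp (\<i> * of_real t + 2 * pi * \<i>)"
      by (simp add: \<theta>_def exp_add[symmetric] algebra_simps)
    then show ?thesis
      by (simp add: exp_add)
  qed
  ultimately show ?thesis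
    using z by blast
qed

locale jacobi_deficiency_pair = jacobi_left_limit_point +
  fixes Pp Pm :: "int \<Rightarrow> complex"
  assumes Pp_l2: "Pp \<in> l2"
    and Pp_eigen: "Lact a b Pp = (\<lambda>k. \<i> * Pp k)"
    and Pm_cnj: "\<And>k. cnj (Pp k) = Pm k"
    and Pp_norm: "l2_norm Pp = 1"
begin

lemma Pm_eq: "Pm = (\<lambda>k. cnj (Pp k))"
  using Pm_cnj by auto

lemma cnj_Pm: "cnj (Pm k) = Pp k"
  by (simp flip: Pm_cnj)

lemma Pm_eigen: "Lact a b Pm = (\<lambda>k. - \<i> * Pm k)"
  unfolding Pm_eq Lact_cnj Pp_eigen by simp

lemma Pp_Dstar: "Pp \<in> Dstar a b"
  using Pp_l2 by (simp add: Dstar_def Pp_eigen l2_scale)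

lemma Pm_Dstar: "Pm \<in> Dstar a b"
  unfolding Pm_eq by (rule Dstar_cnj[OF Pp_Dstar])

lemma Pp_ne_zero: "Pp \<noteq> (\<lambda>k. 0)"
  using Pp_norm by (auto simp: l2_norm_def)

lemma wronskian_tendsto_boundary_form:
  assumes "u \<in> Dstar a b" "v \<in> Dstar a b"
  shows "(\<lambda>N. wronskian a u v (int N)) \<longlonglongrightarrow> boundary_form a b u v"
proof -
  have "(\<lambda>N. (\<Sum>k\<in>{- int N..int N}. Lact a b u k * v k - u k * Lact a b v k)
      + reflect (wronskian a u v) N) \<longlonglongrightarrow> boundary_form a b u v + 0"
    unfolding boundary_form_def
    using wronskian_tendsto_left[OF assms Pp_l2 Pp_eigen Pp_ne_zero]
    by (intro tendsto_add tendsto_sum_symmetric_infsum boundary_form_summable assms)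
      (simp add: tendsto_reflect_iff)
  moreover have "(\<Sum>k\<in>{- int N..int N}. Lact a b u k * v k - u k * Lact a b v k)
      + reflect (wronskian a u v) N = wronskian a u v (int N)" for N
    using sum_Lact_wronskian[of "- int N" "int N" a b u v] by (simp add: reflect_def)
  ultimately show ?thesis
    by simp
qed

lemma boundary_form_Pp_Pm: "boundary_form a b Pp Pm = 2 * \<i>"
proof -
  have "infsum (\<lambda>k. (cmod (Pp k))\<^sup>2) UNIV = 1"
    using Pp_norm by (simp add: l2_norm_def)
  then have "((\<lambda>k. (cmod (Pp k))\<^sup>2) has_sum 1) UNIV"
    using has_sum_infsum[of "\<lambda>k. (cmod (Pp k))\<^sup>2" UNIV] Pp_l2 by (simp add: mem_l2_iff)
  from has_sum_cmult_right[OF has_sum_of_real[OF this], where c = "2 * \<i>"]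
  have "((\<lambda>k. 2 * \<i> * of_real ((cmod (Pp k))\<^sup>2)) has_sum (2 * \<i>)) UNIV"
    by (simp only: of_real_1 mult_1_right)
  moreover have "(\<lambda>k. Lact a b Pp k * Pm k - Pp k * Lact a b Pm k) = (\<lambda>k. 2 * \<i> * of_real ((cmod (Pp k))\<^sup>2))"
    by (simp add: fun_eq_iff Pp_eigen Pm_eigen flip: Pm_cnj complex_norm_square)
  ultimately show ?thesis
    unfolding boundary_form_def by (simp only:) (rule infsumI)
qed

lemma boundary_form_plucker:
  assumes "u \<in> Dstar a b" "w \<in> Dstar a b"
  shows "boundary_form a b u w * boundary_form a b Pp Pm
           = boundary_form a b u Pp * boundary_form a b w Pm - boundary_form a b u Pm * boundary_form a b w Pp"
proof -
  have "(\<lambda>N. wronskian a u w (int N) * wronskian a Pp Pm (int N))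
      \<longlonglongrightarrow> boundary_form a b u Pp * boundary_form a b w Pm - boundary_form a b u Pm * boundary_form a b w Pp"
    unfolding wronskian_plucker[of a u w _ Pp Pm]
    by (intro tendsto_intros wronskian_tendsto_boundary_form assms Pp_Dstar Pm_Dstar)
  moreover have "(\<lambda>N. wronskian a u w (int N) * wronskian a Pp Pm (int N))
      \<longlonglongrightarrow> boundary_form a b u w * boundary_form a b Pp Pm"
    by (intro tendsto_mult wronskian_tendsto_boundary_form assms Pp_Dstar Pm_Dstar)
  ultimately show ?thesis
    using LIMSEQ_unique by blast
qed

lemma boundary_form_coordinates:
  assumes "u \<in> Dstar a b" "w \<in> Dstar a b"
  shows "2 * \<i> * boundary_form a b (\<lambda>k. cnj (u k)) w
           = cnj (boundary_form a b u Pm) * boundary_form a b w Pm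
             - cnj (boundary_form a b u Pp) * boundary_form a b w Pp"
proof -
  have "boundary_form a b (\<lambda>k. cnj (u k)) Pp = cnj (boundary_form a b u Pm)"
    "boundary_form a b (\<lambda>k. cnj (u k)) Pm = cnj (boundary_form a b u Pp)"
    using boundary_form_cnj[of a b u Pm] boundary_form_cnj[of a b u Pp] by (simp_all add: cnj_Pm Pm_cnj)
  then show ?thesis
    using boundary_form_plucker[OF Dstar_cnj[OF assms(1)] assms(2)]
    by (simp add: boundary_form_Pp_Pm mult.commute)
qed

definition psi :: "real \<Rightarrow> int \<Rightarrow> complex" where
  "psi \<theta> = (\<lambda>k. exp (\<i> * of_real \<theta>) * Pp k + exp (- \<i> * of_real \<theta>) * Pm k)"

lemma psi_Dstar: "psi \<theta> \<in> Dstar a b"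
  unfolding psi_def by (rule Dstar_lincomb[OF Pp_Dstar Pm_Dstar])

lemma psi_cnj: "(\<lambda>k. cnj (psi \<theta> k)) = psi \<theta>"
  by (simp add: psi_def fun_eq_iff exp_cnj Pm_cnj cnj_Pm add.commute)

lemma boundary_form_psi:
  "v \<in> Dstar a b \<Longrightarrow> boundary_form a b v (psi \<theta>)
     = exp (\<i> * of_real \<theta>) * boundary_form a b v Pp + exp (- \<i> * of_real \<theta>) * boundary_form a b v Pm"
  unfolding psi_def by (rule boundary_form_lincomb_right[OF _ Pp_Dstar Pm_Dstar])

lemma Dtheta_iff: "v \<in> Dtheta a b Pp Pm \<theta> \<longleftrightarrow> v \<in> Dstar a b \<and> boundary_form a b v (psi \<theta>) = 0"
proof -
  have "(\<lambda>N. wronskian a v (psi \<theta>) (int N)) \<longlonglongrightarrow> 0 \<longleftrightarrow> boundary_form a b v (psi \<theta>) = 0"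
    if "v \<in> Dstar a b"
    using wronskian_tendsto_boundary_form[OF that psi_Dstar, of \<theta>] LIMSEQ_unique by metis
  then show ?thesis
    unfolding Dtheta_def psi_def by auto
qed

lemma Dtheta_coordinates:
  "v \<in> Dtheta a b Pp Pm \<theta> \<longleftrightarrow> v \<in> Dstar a b \<and>
     exp (\<i> * of_real \<theta>) * boundary_form a b v Pp + exp (- \<i> * of_real \<theta>) * boundary_form a b v Pm = 0"
  using boundary_form_psi[of v \<theta>] by (auto simp: Dtheta_iff)

lemma psi_in_Dtheta: "psi \<theta> \<in> Dtheta a b Pp Pm \<theta>"
  using boundary_form_antisym[of a b "psi \<theta>" "psi \<theta>"] by (simp add: Dtheta_iff psi_Dstar)

lemma fin_seq_subset_Dtheta: "fin_seq \<subseteq> Dtheta a b Pp Pm \<theta>"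
proof
  fix u :: "int \<Rightarrow> complex"
  assume u: "u \<in> fin_seq"
  obtain M :: nat where M: "\<And>k. int M < \<bar>k\<bar> \<Longrightarrow> u k = 0"
    using fin_seq_int_bound[OF u] by blast
  have "\<forall>\<^sub>F N in sequentially. wronskian a u (psi \<theta>) (int N) = 0"
    unfolding eventually_sequentially using M by (intro exI[of _ "Suc M"]) (auto simp: wronskian_def)
  then show "u \<in> Dtheta a b Pp Pm \<theta>"
    using u fin_seq_subset_Dstar tendsto_eventually unfolding Dtheta_def psi_def by fastforce
qed

lemma Dtheta_isotropic:
  assumes "u \<in> Dtheta a b Pp Pm \<theta>" "w \<in> Dtheta a b Pp Pm \<theta>"
  shows "boundary_form a b (\<lambda>k. cnj (u k)) w = 0"
proof -
  define E where "E = exp (\<i> * of_real \<theta>)"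
  define E' where "E' = exp (- \<i> * of_real \<theta>)"
  have "E * E' = 1" "cnj E = E'" "cnj E' = E"
    by (simp_all add: E_def E'_def exp_cnj flip: exp_add)
  have "u \<in> Dstar a b" "w \<in> Dstar a b"
    and u: "E * boundary_form a b u Pp + E' * boundary_form a b u Pm = 0"
    and w: "E * boundary_form a b w Pp + E' * boundary_form a b w Pm = 0"
    using assms by (simp_all add: Dtheta_coordinates E_def E'_def)
  from u have "E' * cnj (boundary_form a b u Pp) + E * cnj (boundary_form a b u Pm) = 0"
    using \<open>cnj E = E'\<close> \<open>cnj E' = E\<close> by (metis complex_cnj_add complex_cnj_mult complex_cnj_zero)
  with w \<open>E * E' = 1\<close> have "cnj (boundary_form a b u Pm) * boundary_form a b w Pm
      - cnj (boundary_form a b u Pp) * boundary_form a b w Pp = 0"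
    by algebra
  then show ?thesis
    using boundary_form_coordinates[OF \<open>u \<in> Dstar a b\<close> \<open>w \<in> Dstar a b\<close>] by simp
qed

lemma Dtheta_lagrangian: "boundary_lagrangian a b (Dtheta a b Pp Pm \<theta>)"
proof -
  have "w \<in> Dtheta a b Pp Pm \<theta>"
    if "w \<in> Dstar a b" "\<forall>u \<in> Dtheta a b Pp Pm \<theta>. boundary_form a b (\<lambda>k. cnj (u k)) w = 0" for w
  proof -
    have "boundary_form a b (psi \<theta>) w = 0"
      using that psi_in_Dtheta psi_cnj by metis
    then show ?thesis
      using boundary_form_antisym[of a b w "psi \<theta>"] that by (simp add: Dtheta_iff)
  qed
  then show ?thesis
    using Dtheta_isotropic by (auto simp: boundary_lagrangian_def Dtheta_def)
qed

lemma lagrangian_boundary_value_nonzero: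
  assumes "boundary_lagrangian a b DA"
  shows "\<exists>u \<in> DA. boundary_form a b u Pm \<noteq> 0"
proof (rule ccontr)
  assume none: "\<not> (\<exists>u \<in> DA. boundary_form a b u Pm \<noteq> 0)"
  have "DA \<subseteq> Dstar a b"
    using assms by (simp add: boundary_lagrangian_def)
  have "boundary_form a b u Pp = 0" if "u \<in> DA" for u
    using that none boundary_form_coordinates[of u u] boundary_lagrangian_isotropic[OF assms that that]
      \<open>DA \<subseteq> Dstar a b\<close> by auto
  then have "boundary_form a b (\<lambda>k. cnj (u k)) Pp = 0" if "u \<in> DA" for u
    using that none boundary_form_coordinates[OF _ Pp_Dstar, of u] \<open>DA \<subseteq> Dstar a b\<close> by auto
  then have "Pp \<in> DA"
    using assms Pp_Dstar by (simp add: boundary_lagrangian_def)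
  then show False
    using none boundary_form_Pp_Pm by simp
qed

lemma lagrangian_eq_Dtheta:
  assumes lag: "boundary_lagrangian a b DA"
  shows "\<exists>\<theta>\<in>{0..<2 * pi}. DA = Dtheta a b Pp Pm \<theta>"
proof -
  define \<alpha> where "\<alpha> u = boundary_form a b u Pp" for u
  define \<beta> where "\<beta> u = boundary_form a b u Pm" for u
  have isotropic: "cnj (\<beta> u) * \<beta> w = cnj (\<alpha> u) * \<alpha> w" if "u \<in> DA" "w \<in> DA" for u w
    using boundary_form_coordinates[of u w] boundary_lagrangian_isotropic[OF lag that] that lag
    by (auto simp: \<alpha>_def \<beta>_def boundary_lagrangian_def)
  obtain u0 where "u0 \<in> DA" "\<beta> u0 \<noteq> 0"
    using lagrangian_boundary_value_nonzero[OF lag] by (auto simp: \<beta>_def)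
  have "complex_of_real ((cmod (\<alpha> u0))\<^sup>2) = of_real ((cmod (\<beta> u0))\<^sup>2)"
    using isotropic[OF \<open>u0 \<in> DA\<close> \<open>u0 \<in> DA\<close>] by (simp only: complex_norm_square mult.commute)
  then have "cmod (\<alpha> u0) = cmod (\<beta> u0)"
    by (simp only: of_real_eq_iff) simp
  then obtain \<theta> where "\<theta> \<in> {0..<2 * pi}"
    and \<theta>: "exp (\<i> * of_real \<theta>) * exp (\<i> * of_real \<theta>) = - cnj (\<alpha> u0) / cnj (\<beta> u0)"
    using exists_angle_double[of "- cnj (\<alpha> u0) / cnj (\<beta> u0)"] \<open>\<beta> u0 \<noteq> 0\<close> by (auto simp: norm_divide)
  define E where "E = exp (\<i> * of_real \<theta>)"
  define E' where "E' = exp (- \<i> * of_real \<theta>)"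
  have "E * E' = 1"
    by (simp add: E_def E'_def flip: exp_add)
  have "DA \<subseteq> Dtheta a b Pp Pm \<theta>"
  proof
    fix u
    assume "u \<in> DA"
    have "cnj (\<beta> u0) * (E' * \<beta> u + E * \<alpha> u) = 0"
      using isotropic[OF \<open>u0 \<in> DA\<close> \<open>u \<in> DA\<close>] \<theta> \<open>E * E' = 1\<close> \<open>\<beta> u0 \<noteq> 0\<close>
      unfolding E_def[symmetric] by (simp add: field_simps) algebra
    then show "u \<in> Dtheta a b Pp Pm \<theta>"
      using \<open>u \<in> DA\<close> lag \<open>\<beta> u0 \<noteq> 0\<close>
      by (auto simp: Dtheta_coordinates E_def E'_def \<alpha>_def \<beta>_def add.commute boundary_lagrangian_def)
  qed
  then show ?thesis
    using boundary_lagrangian_subset_eq[OF lag Dtheta_lagrangian] \<open>\<theta> \<in> {0..<2 * pi}\<close> by blast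
qed

end

theorem lemma4p2p3:
  fixes a b :: "int \<Rightarrow> real" and Pp Pm :: "int \<Rightarrow> complex"
  assumes apos: "\<And>k. a k > 0"
    and Jm: "def_indices_00 (Jminus a b) fin_seq"
    and Jp: "def_indices_11 (Jplus a b) fin_seq"
    and Pp_l2: "Pp \<in> l2" and Pm_l2: "Pm \<in> l2"
    and Pp_eig: "Lact a b Pp = (\<lambda>k. \<i> * Pp k)"
    and Pm_eig: "Lact a b Pm = (\<lambda>k. - \<i> * Pm k)"
    and conj: "\<And>k. cnj (Pp k) = Pm k"
    and Pp_norm: "l2_norm Pp = 1" and Pm_norm: "l2_norm Pm = 1"
  shows "\<forall>A DA. self_adjoint_ext (Lact a b) fin_seq A DA \<longleftrightarrow>
           (\<exists>\<theta> \<in> {0..<2 * pi}. DA = Dtheta a b Pp Pm \<theta> \<and> (\<forall>v \<in> DA. A v = Lact a b v))"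
proof -
  interpret jacobi_deficiency_pair a b Pp Pm
    using apos Jm Pp_l2 Pp_eig conj Pp_norm by unfold_locales
  show ?thesis
    unfolding self_adjoint_ext_iff_lagrangian
    using fin_seq_subset_Dtheta Dtheta_lagrangian lagrangian_eq_Dtheta by blast
qed

end
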